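(* Consider an asynchronous execution of the Arrow protocol for a set of requests $R$ on a tree $T$ (extended by virtual broadcast messages), with requests indexed $r_0,r_1,\dots$ in the resulting queueing order, and let $r_i,r_j$ be requests with $i<j$. Then (1) $t_i-t_j\le d_T(v_i,v_j)$, and (2) if $i\ge1$, $t_i+\Delta(r_i,v_{i-1})\le t_j+d_T(v_{i-1},v_j)$.
   Context: Requests $r_i=(v_i,t_i)$ are issued at node $v_i$ at time $t_i\ge0$; $r_0=(v_0,0)$ is a dummy request; $d_T$ is weighted tree distance. Arrow protocol on $T$: each node $u$ has a pointer $\mathrm{link}(u)$ (itself or a neighbour), initially pointing towards $v_0$ with $\mathrm{link}(v_0)=v_0$. When $r$ is issued at $v$: if $\mathrm{link}(v)=v$, $r$ is queued behind the previous request at $v$; otherwise atomically $\mathrm{find}(r)$ ("find predecessor") is sent to $\mathrm{link}(v)$ and $\mathrm{link}(v):=v$. When $u$ receives $\mathrm{find}(r)$ from $w$: if $\mathrm{link}(u)=u$, atomically $r$ is queued behind the last request issued at $u$ and $\mathrm{link}(u):=w$; otherwise it is atomically forwarded to $\mathrm{link}(u)$ and $\mathrm{link}(u):=w$. Asynchronous: each delay over edge $e$ is at most the weight $w(e)$. Virtual extension: the "find predecessor" message of each request is additionally broadcast to the whole tree by virtual messages not influencing the protocol; virtual messages over edge $e$ have delay exactly $w(e)$, and at simultaneous arrival real messages are processed first. $\Delta(r,u)$ is the time the "find predecessor" message of $r$ needs from its issue to reach node $u$. *)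

theory Defs
  imports Complex_Main
begin

definition is_walk :: "('v \<Rightarrow> 'v \<Rightarrow> bool) \<Rightarrow> 'v list \<Rightarrow> bool" where
  "is_walk E xs \<longleftrightarrow> xs \<noteq> [] \<and> (\<forall>i. Suc i < length xs \<longrightarrow> E (xs ! i) (xs ! Suc i))"

fun walk_weight :: "('v \<Rightarrow> 'v \<Rightarrow> real) \<Rightarrow> 'v list \<Rightarrow> real" where
  "walk_weight w (x # y # xs) = w x y + walk_weight w (y # xs)"
| "walk_weight w _ = 0"

definition tree_dist :: "('v \<Rightarrow> 'v \<Rightarrow> bool) \<Rightarrow> ('v \<Rightarrow> 'v \<Rightarrow> real) \<Rightarrow> 'v \<Rightarrow> 'v \<Rightarrow> real" where
  "tree_dist E w u v =
     Inf {walk_weight w xs | xs. is_walk E xs \<and> hd xs = u \<and> last xs = v}"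

definition is_cycle :: "('v \<Rightarrow> 'v \<Rightarrow> bool) \<Rightarrow> 'v list \<Rightarrow> bool" where
  "is_cycle E xs \<longleftrightarrow> length xs \<ge> 3 \<and> distinct xs \<and> is_walk E xs \<and> E (last xs) (hd xs)"

definition weighted_tree :: "'v set \<Rightarrow> ('v \<Rightarrow> 'v \<Rightarrow> bool) \<Rightarrow> ('v \<Rightarrow> 'v \<Rightarrow> real) \<Rightarrow> bool" where
  "weighted_tree V E w \<longleftrightarrow>
     finite V \<and> V \<noteq> {} \<and>
     (\<forall>u v. E u v \<longrightarrow> u \<in> V \<and> v \<in> V) \<and>
     (\<forall>u v. E u v \<longleftrightarrow> E v u) \<and> (\<forall>u. \<not> E u u) \<and>
     (\<forall>u v. E u v \<longrightarrow> 0 < w u v \<and> w u v = w v u) \<and>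
     (\<forall>u\<in>V. \<forall>v\<in>V. \<exists>xs. is_walk E xs \<and> hd xs = u \<and> last xs = v) \<and>
     \<not> (\<exists>xs. is_cycle E xs)"

text \<open>Requests are elements of R; request r is issued at node (node r) at time (time r);
  r0 is the dummy request (v0, 0).\<close>
definition arrow_requests ::
  "'v set \<Rightarrow> 'r set \<Rightarrow> 'r \<Rightarrow> ('r \<Rightarrow> 'v) \<Rightarrow> ('r \<Rightarrow> real) \<Rightarrow> bool" where
  "arrow_requests V R r0 node time \<longleftrightarrow>
     finite R \<and> r0 \<in> R \<and> time r0 = 0 \<and> (\<forall>r\<in>R. node r \<in> V \<and> 0 \<le> time r)"

text \<open>Initial pointers: every node points to its neighbour towards v0, link(v0) = v0.\<close>
definition initial_links ::
  "'v set \<Rightarrow> ('v \<Rightarrow> 'v \<Rightarrow> bool) \<Rightarrow> ('v \<Rightarrow> 'v \<Rightarrow> real) \<Rightarrow> 'v \<Rightarrow> ('v \<Rightarrow> 'v) \<Rightarrow> bool" where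
  "initial_links V E w v0 lnk0 \<longleftrightarrow>
     lnk0 v0 = v0 \<and>
     (\<forall>u\<in>V. u \<noteq> v0 \<longrightarrow> E u (lnk0 u) \<and>
        tree_dist E w u v0 = w u (lnk0 u) + tree_dist E w (lnk0 u) v0)"

text \<open>A message in transit is (request, sender, receiver, send time).
  lst u = last request issued at u (initially r0);
  prd r = request behind which r got queued;
  vis r u = time at which the (real) find message of r was at node u
  (issue time at the issuing node, receipt time elsewhere).\<close>
record ('v, 'r) arrow_state =
  clk :: real
  lnk :: "'v \<Rightarrow> 'v"
  lst :: "'v \<Rightarrow> 'r"
  iss :: "'r set"
  trans :: "('r \<times> 'v \<times> 'v \<times> real) set"
  prd :: "'r \<Rightarrow> 'r option"
  vis :: "'r \<Rightarrow> 'v \<Rightarrow> real option"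

datatype ('v, 'r) arrow_event = Issue 'r | Deliver "'r \<times> 'v \<times> 'v \<times> real" real

definition init_state :: "('v \<Rightarrow> 'v) \<Rightarrow> 'r \<Rightarrow> ('v, 'r) arrow_state" where
  "init_state lnk0 r0 = \<lparr>clk = 0, lnk = lnk0, lst = (\<lambda>_. r0), iss = {}, trans = {},
     prd = (\<lambda>_. None), vis = (\<lambda>_ _. None)\<rparr>"

text \<open>Global time never decreases along an execution.\<close>
fun enabled :: "('v \<Rightarrow> 'v \<Rightarrow> real) \<Rightarrow> 'r set \<Rightarrow> 'r \<Rightarrow> ('r \<Rightarrow> real) \<Rightarrow>
    ('v, 'r) arrow_state \<Rightarrow> ('v, 'r) arrow_event \<Rightarrow> bool" where
  "enabled w R r0 time s (Issue r) \<longleftrightarrow>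
     r \<in> R \<and> r \<noteq> r0 \<and> r \<notin> iss s \<and> clk s \<le> time r"
| "enabled w R r0 time s (Deliver (r, x, u, \<sigma>) \<tau>) \<longleftrightarrow>
     (r, x, u, \<sigma>) \<in> trans s \<and> clk s \<le> \<tau> \<and> \<sigma> \<le> \<tau> \<and> \<tau> \<le> \<sigma> + w x u"

fun step :: "('r \<Rightarrow> 'v) \<Rightarrow> ('r \<Rightarrow> real) \<Rightarrow>
    ('v, 'r) arrow_state \<Rightarrow> ('v, 'r) arrow_event \<Rightarrow> ('v, 'r) arrow_state" where
  "step node time s (Issue r) =
     (let v = node r;
          s' = s\<lparr>clk := time r, lst := (lst s)(v := r), iss := insert r (iss s),
                 vis := (vis s)(r := (vis s r)(v := Some (time r)))\<rparr>
      in if lnk s v = v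
         then s'\<lparr>prd := (prd s)(r := Some (lst s v))\<rparr>
         else s'\<lparr>lnk := (lnk s)(v := v),
                 trans := insert (r, v, lnk s v, time r) (trans s)\<rparr>)"
| "step node time s (Deliver (r, x, u, \<sigma>) \<tau>) =
     (let s' = s\<lparr>clk := \<tau>, trans := trans s - {(r, x, u, \<sigma>)},
                 vis := (vis s)(r := (vis s r)(u := Some \<tau>))\<rparr>
      in if lnk s u = u
         then s'\<lparr>lnk := (lnk s)(u := x), prd := (prd s)(r := Some (lst s u))\<rparr>
         else s'\<lparr>lnk := (lnk s)(u := x),
                 trans := insert (r, u, lnk s u, \<tau>) (trans s')\<rparr>)"

fun valid_run :: "('v \<Rightarrow> 'v \<Rightarrow> real) \<Rightarrow> 'r set \<Rightarrow> 'r \<Rightarrow> ('r \<Rightarrow> 'v) \<Rightarrow> ('r \<Rightarrow> real) \<Rightarrow>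
    ('v, 'r) arrow_state \<Rightarrow> ('v, 'r) arrow_event list \<Rightarrow> bool" where
  "valid_run w R r0 node time s [] = True"
| "valid_run w R r0 node time s (e # es) =
     (enabled w R r0 time s e \<and> valid_run w R r0 node time (step node time s e) es)"

definition final_state :: "('r \<Rightarrow> 'v) \<Rightarrow> ('r \<Rightarrow> real) \<Rightarrow> 'r \<Rightarrow> ('v \<Rightarrow> 'v) \<Rightarrow>
    ('v, 'r) arrow_event list \<Rightarrow> ('v, 'r) arrow_state" where
  "final_state node time r0 lnk0 es = foldl (step node time) (init_state lnk0 r0) es"

definition arrow_execution :: "('v \<Rightarrow> 'v \<Rightarrow> real) \<Rightarrow> 'r set \<Rightarrow> 'r \<Rightarrow> ('r \<Rightarrow> 'v) \<Rightarrow>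
    ('r \<Rightarrow> real) \<Rightarrow> ('v \<Rightarrow> 'v) \<Rightarrow> ('v, 'r) arrow_event list \<Rightarrow> bool" where
  "arrow_execution w R r0 node time lnk0 es \<longleftrightarrow>
     valid_run w R r0 node time (init_state lnk0 r0) es \<and>
     iss (final_state node time r0 lnk0 es) = R - {r0} \<and>
     trans (final_state node time r0 lnk0 es) = {}"

text \<open>Resulting queueing order: a comes before b (i < j for a = r_i, b = r_j).\<close>
definition queue_before :: "'r set \<Rightarrow> ('v, 'r) arrow_state \<Rightarrow> ('r \<times> 'r) set" where
  "queue_before R s = {(x, y). y \<in> R \<and> prd s y = Some x}\<^sup>+"

text \<open>Virtual extension: the find message of r is broadcast over the whole tree; the
  copy leaving the real path at node p (at the time the real message is at p) travels
  with delay exactly the edge weights. Hence the message of r reaches u at time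
  vis r p + d_T(p,u), where p is the node of the real path closest to u.\<close>
definition reach_time :: "('v \<Rightarrow> 'v \<Rightarrow> bool) \<Rightarrow> ('v \<Rightarrow> 'v \<Rightarrow> real) \<Rightarrow>
    ('v, 'r) arrow_state \<Rightarrow> 'r \<Rightarrow> 'v \<Rightarrow> real" where
  "reach_time E w s r u =
     (let p = arg_min (\<lambda>p. tree_dist E w p u) (\<lambda>p. vis s r p \<noteq> None)
      in the (vis s r p) + tree_dist E w p u)"

definition Delta :: "('v \<Rightarrow> 'v \<Rightarrow> bool) \<Rightarrow> ('v \<Rightarrow> 'v \<Rightarrow> real) \<Rightarrow>
    ('v, 'r) arrow_state \<Rightarrow> ('r \<Rightarrow> real) \<Rightarrow> 'r \<Rightarrow> 'v \<Rightarrow> real" where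
  "Delta E w s time r u = reach_time E w s r u - time r"

end

theory Submission
  imports Defs
begin

text \<open>
  Besides the predecessor relation the proof tracks a queue graph on requests: its edges are the
  predecessor edges fixed so far and, for every find message of r travelling towards y, an edge
  from tail s y, the request r would be queued behind if it arrived now. Each request has at most
  one incoming edge and r0 none, so the part reachable from r0 is acyclic; a protocol step only
  refines edges into paths, so reachability survives until the end, where it contains the queueing
  order.

  Fix r_j and call a node q behind r_j once r_j reaches tail s q. By induction over the execution,
  a message crossing from a node x behind r_j to a node outside was sent by t_j + d_T(v_j, x).
  Walking from v_j to a node u outside the region up to the first boundary edge, whose message is
  delivered within the edge weight, shows that the clock is at most t_j + d_T(v_j, u) while u is
  outside. Hence a later visit of the find message of r_i at u would queue r_i after r_j. At u = v_i
  this is (1); for (2), the visited node closest to v_(i-1) is v_(i-1) itself.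
\<close>

section \<open>Walks and distances in a weighted tree\<close>

lemma list_crosses_boundary:
  assumes "xs \<noteq> []" "P (hd xs)" "\<not> P (last xs)"
  shows "\<exists>i. Suc i < length xs \<and> P (xs!i) \<and> \<not> P (xs!Suc i)"
  using assms
proof (induction xs rule: induct_list012)
  case (3 x y zs)
  show ?case
  proof (cases "P y")
    case True
    then obtain i where "Suc i < length (y # zs)" "P ((y # zs)!i)" "\<not> P ((y # zs)!Suc i)"
      using 3 by auto
    then show ?thesis by (intro exI[of _ "Suc i"]) simp
  next
    case False
    then show ?thesis using 3 by (intro exI[of _ 0]) simp
  qed
qed auto

lemma walk_weight_conv_sum:
  "walk_weight w xs = (\<Sum>i < length xs - 1. w (xs!i) (xs!Suc i))"
proof (induction w xs rule: walk_weight.induct)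
  case (1 w x y xs)
  have "(\<Sum>i < length (x # y # xs) - 1. w ((x # y # xs)!i) ((x # y # xs)!Suc i))
      = w x y + (\<Sum>i < length (y # xs) - 1. w ((y # xs)!i) ((y # xs)!Suc i))"
    by (simp add: sum.lessThan_Suc_shift del: sum.lessThan_Suc)
  with 1 show ?case by simp
qed auto

lemma walk_weight_snoc:
  "walk_weight w (xs @ [y, z]) = walk_weight w (xs @ [y]) + w y z"
  by (induction w xs rule: walk_weight.induct) auto

lemma is_walk_Cons_Cons: "is_walk E (x # y # xs) \<longleftrightarrow> E x y \<and> is_walk E (y # xs)"
  unfolding is_walk_def by (auto simp: less_Suc_eq_0_disj)

lemma is_walk_singleton [simp]: "is_walk E [x]"
  by (simp add: is_walk_def)

lemma is_walk_append:
  assumes "is_walk E xs" "is_walk E ys" "E (last xs) (hd ys)"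
  shows "is_walk E (xs @ ys)"
  using assms
proof (induction xs rule: induct_list012)
  case (3 x y zs)
  then show ?case by (simp add: is_walk_Cons_Cons)
qed (auto simp: is_walk_def hd_conv_nth nth_Cons split: nat.split)

lemma is_walk_take:
  assumes "is_walk E xs" "i < length xs"
  shows "is_walk E (take (Suc i) xs)"
  using assms by (auto simp: is_walk_def)

locale wtree =
  fixes V :: "'v set" and E :: "'v \<Rightarrow> 'v \<Rightarrow> bool" and w :: "'v \<Rightarrow> 'v \<Rightarrow> real"
  assumes weighted_tree: "weighted_tree V E w"
begin

lemma finite_V: "finite V"
  using weighted_tree by (simp add: weighted_tree_def)

lemma edge_in_V: "E u v \<Longrightarrow> u \<in> V \<and> v \<in> V"
  using weighted_tree unfolding weighted_tree_def by blast

lemma edge_sym: "E u v \<Longrightarrow> E v u"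
  using weighted_tree unfolding weighted_tree_def by blast

lemma edge_irrefl: "\<not> E u u"
  using weighted_tree by (simp add: weighted_tree_def)

lemma weight_pos: "E u v \<Longrightarrow> 0 < w u v"
  using weighted_tree by (simp add: weighted_tree_def)

lemma weight_sym: "E u v \<Longrightarrow> w u v = w v u"
  using weighted_tree by (simp add: weighted_tree_def)

lemma connected: "u \<in> V \<Longrightarrow> v \<in> V \<Longrightarrow> \<exists>xs. is_walk E xs \<and> hd xs = u \<and> last xs = v"
  using weighted_tree by (simp add: weighted_tree_def)

lemma no_cycle:
  assumes "distinct xs" "is_walk E xs" "E (last xs) (hd xs)" "3 \<le> length xs"
  shows False
  using weighted_tree assms by (auto simp: weighted_tree_def is_cycle_def)

lemma walk_step_weight_nonneg:
  "is_walk E xs \<Longrightarrow> Suc i < length xs \<Longrightarrow> 0 \<le> w (xs!i) (xs!Suc i)"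
  unfolding is_walk_def by (simp add: less_imp_le weight_pos)

lemma walk_weight_nonneg: "is_walk E xs \<Longrightarrow> 0 \<le> walk_weight w xs"
  unfolding walk_weight_conv_sum by (intro sum_nonneg) (simp add: walk_step_weight_nonneg)

lemma walk_weight_rev: "is_walk E xs \<Longrightarrow> walk_weight w (rev xs) = walk_weight w xs"
proof (induction xs rule: induct_list012)
  case (3 x y zs)
  then have "walk_weight w (rev (y # zs)) = walk_weight w (y # zs)" "w y x = w x y"
    by (auto simp: is_walk_Cons_Cons dest: weight_sym)
  then show ?case by (simp add: walk_weight_snoc[where xs = "rev zs", simplified])
qed auto

lemma is_walk_rev: "is_walk E xs \<Longrightarrow> is_walk E (rev xs)"
proof (induction xs rule: induct_list012)
  case (3 x y zs)
  then show ?case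
    using is_walk_append[where xs = "rev zs @ [y]" and ys = "[x]"] by (auto simp: is_walk_Cons_Cons edge_sym)
qed auto

lemma tree_dist_le_walk_weight:
  "is_walk E xs \<Longrightarrow> tree_dist E w (hd xs) (last xs) \<le> walk_weight w xs"
  unfolding tree_dist_def
  by (rule cInf_lower) (auto intro: bdd_belowI[of _ 0] walk_weight_nonneg)

lemma tree_dist_greatest:
  assumes "u \<in> V" "v \<in> V"
    and "\<And>xs. is_walk E xs \<Longrightarrow> hd xs = u \<Longrightarrow> last xs = v \<Longrightarrow> c \<le> walk_weight w xs"
  shows "c \<le> tree_dist E w u v"
  unfolding tree_dist_def using connected[OF assms(1,2)] assms(3)
  by (intro cInf_greatest) auto

lemma tree_dist_nonneg: "u \<in> V \<Longrightarrow> v \<in> V \<Longrightarrow> 0 \<le> tree_dist E w u v"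
  by (rule tree_dist_greatest) (auto intro: walk_weight_nonneg)

lemma tree_dist_self: "u \<in> V \<Longrightarrow> tree_dist E w u u = 0"
  using tree_dist_le_walk_weight[of "[u]"] tree_dist_nonneg[of u u] by simp

lemma tree_dist_sym: "tree_dist E w u v = tree_dist E w v u"
proof -
  have "{walk_weight w xs | xs. is_walk E xs \<and> hd xs = u \<and> last xs = v}
      = {walk_weight w xs | xs. is_walk E xs \<and> hd xs = v \<and> last xs = u}" for u v
    using is_walk_rev walk_weight_rev hd_rev last_rev by (smt (verit) Collect_cong rev_rev_ident)
  then show ?thesis by (simp add: tree_dist_def)
qed

lemma walk_join:
  assumes "is_walk E xs" "is_walk E ys" "last xs = hd ys"
  shows "is_walk E (xs @ tl ys) \<and> walk_weight w (xs @ tl ys) = walk_weight w xs + walk_weight w ys"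
  using assms
proof (induction xs rule: induct_list012)
  case (2 x)
  then show ?case by (cases ys) (auto simp: is_walk_def)
next
  case (3 x y zs)
  then show ?case by (simp add: is_walk_Cons_Cons)
qed (simp add: is_walk_def)

lemma tree_dist_triangle:
  assumes "u \<in> V" "m \<in> V" "v \<in> V"
  shows "tree_dist E w u v \<le> tree_dist E w u m + tree_dist E w m v"
proof -
  have join: "tree_dist E w u v \<le> walk_weight w xs + walk_weight w ys"
    if xs: "is_walk E xs" "hd xs = u" "last xs = m" and ys: "is_walk E ys" "hd ys = m" "last ys = v"
    for xs ys
  proof -
    have "xs \<noteq> []" "ys \<noteq> []" using xs ys by (auto simp: is_walk_def)
    then have "hd (xs @ tl ys) = u" "last (xs @ tl ys) = v"
      using xs ys by (cases ys; auto)+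
    then show ?thesis
      using walk_join[OF xs(1) ys(1)] xs(3) ys(2) tree_dist_le_walk_weight by metis
  qed
  have "tree_dist E w u v - walk_weight w ys \<le> tree_dist E w u m"
    if "is_walk E ys" "hd ys = m" "last ys = v" for ys
    using join that by (intro tree_dist_greatest assms) (auto simp: algebra_simps)
  then have "tree_dist E w u v - tree_dist E w u m \<le> tree_dist E w m v"
    by (intro tree_dist_greatest assms) (auto simp: algebra_simps)
  then show ?thesis by simp
qed

lemma tree_dist_add_edge_le:
  assumes "is_walk E xs" "Suc i < length xs"
  shows "tree_dist E w (hd xs) (xs!i) + w (xs!i) (xs!Suc i) \<le> walk_weight w xs"
proof -
  have "hd (take (Suc i) xs) = hd xs" "last (take (Suc i) xs) = xs!i"
    using assms(2) by (cases xs, auto simp: take_Suc_conv_app_nth)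
  then have "tree_dist E w (hd xs) (xs!i) \<le> walk_weight w (take (Suc i) xs)"
    using tree_dist_le_walk_weight[OF is_walk_take[OF assms(1), of i]] assms(2) by simp
  also have "\<dots> = (\<Sum>j < i. w (xs!j) (xs!Suc j))"
    using assms(2) by (simp add: walk_weight_conv_sum min_def)
  finally have "tree_dist E w (hd xs) (xs!i) + w (xs!i) (xs!Suc i) \<le> (\<Sum>j < Suc i. w (xs!j) (xs!Suc j))"
    by simp
  also have "\<dots> \<le> (\<Sum>j < length xs - 1. w (xs!j) (xs!Suc j))"
    using assms by (intro sum_mono2) (auto intro: walk_step_weight_nonneg)
  finally show ?thesis by (simp add: walk_weight_conv_sum)
qed

end

section \<open>Link maps on a tree\<close>

definition tree_links :: "'v set \<Rightarrow> ('v \<Rightarrow> 'v \<Rightarrow> bool) \<Rightarrow> ('v \<Rightarrow> 'v) \<Rightarrow> bool" where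
  "tree_links V E L \<longleftrightarrow>
     (\<forall>x\<in>V. L x \<in> V \<and> (L x \<noteq> x \<longrightarrow> E x (L x)) \<and> (L (L x) = x \<longrightarrow> L x = x))"

(* The end of the link path from q: card V steps always reach a fixed point (sink_fixed). *)
definition sink :: "'v set \<Rightarrow> ('v \<Rightarrow> 'v) \<Rightarrow> 'v \<Rightarrow> 'v" where
  "sink V L q = (L ^^ card V) q"

lemma funpow_fixpoint_stable:
  "L ((L^^i) q) = (L^^i) q \<Longrightarrow> i \<le> j \<Longrightarrow> (L^^j) q = (L^^i) q"
  by (induction j) (auto simp: le_Suc_eq)

lemma funpow_add_apply: "(f^^a) ((f^^b) x) = (f^^(a + b)) x"
  by (simp add: funpow_add)

lemma funpow_fixpoint: "L q = q \<Longrightarrow> (L^^k) q = q"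
  by (induction k) auto

lemma link_paths_first_meeting:
  assumes "(L^^n) x = (L^^m) y"
  obtains i0 j0 where "(L^^i0) x = (L^^j0) y"
    and "\<And>i. i < i0 \<Longrightarrow> L ((L^^i) x) \<noteq> (L^^i) x"
    and "\<And>j. j < j0 \<Longrightarrow> L ((L^^j) y) \<noteq> (L^^j) y"
    and "\<And>i j. i \<le> i0 \<Longrightarrow> j < j0 \<Longrightarrow> (L^^i) x \<noteq> (L^^j) y"
proof -
  let ?Y = "range (\<lambda>j. (L^^j) y)"
  define i0 where "i0 = (LEAST i. (L^^i) x \<in> ?Y)"
  have i0: "(L^^i0) x \<in> ?Y"
    unfolding i0_def by (rule LeastI[of _ n]) (use assms in auto)
  have i0_min: "\<And>i. i < i0 \<Longrightarrow> (L^^i) x \<notin> ?Y"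
    unfolding i0_def by (rule not_less_Least)
  obtain j where "(L^^j) y = (L^^i0) x" using i0 by auto
  define j0 where "j0 = (LEAST j. (L^^j) y = (L^^i0) x)"
  have j0: "(L^^j0) y = (L^^i0) x"
    unfolding j0_def by (rule LeastI) fact
  have j0_min: "\<And>j. j < j0 \<Longrightarrow> (L^^j) y \<noteq> (L^^i0) x"
    unfolding j0_def by (rule not_less_Least)
  show thesis
  proof (rule that[OF j0[symmetric]])
    show "L ((L^^i) x) \<noteq> (L^^i) x" if "i < i0" for i
      using funpow_fixpoint_stable[of L i x i0] that i0 i0_min by fastforce
    show "L ((L^^j) y) \<noteq> (L^^j) y" if "j < j0" for j
      using funpow_fixpoint_stable[of L j y j0] that j0 j0_min by fastforce
    show "(L^^i) x \<noteq> (L^^j) y" if "i \<le> i0" "j < j0" for i j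
      using i0_min[of i] j0_min[OF that(2)] that(1) by (cases "i = i0") auto
  qed
qed

context wtree
begin

lemma tree_links_funpow_in_V: "tree_links V E L \<Longrightarrow> q \<in> V \<Longrightarrow> (L^^i) q \<in> V"
  by (induction i) (auto simp: tree_links_def)

lemma tree_links_edge: "tree_links V E L \<Longrightarrow> q \<in> V \<Longrightarrow> L q \<noteq> q \<Longrightarrow> E q (L q)"
  by (simp add: tree_links_def)

lemma tree_links_no_swap: "tree_links V E L \<Longrightarrow> x \<in> V \<Longrightarrow> L (L x) = x \<Longrightarrow> L x = x"
  by (simp add: tree_links_def)

lemma tree_links_orbit_walk:
  assumes "tree_links V E L" "q \<in> V" "\<And>i. i < m \<Longrightarrow> L ((L^^i) q) \<noteq> (L^^i) q"
  shows "is_walk E (map (\<lambda>i. (L^^i) q) [0..<Suc m])"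
  using assms tree_links_edge[OF assms(1) tree_links_funpow_in_V[OF assms(1,2)]]
  unfolding is_walk_def by (simp del: upt_Suc)

lemma tree_links_periodic_imp_fixed:
  assumes L: "tree_links V E L" and q: "q \<in> V" and period: "0 < n" "(L^^n) q = q"
  shows "L q = q"
proof (rule ccontr)
  assume moving: "L q \<noteq> q"
  define m where "m = (LEAST m. 0 < m \<and> (L^^m) q = q)"
  have m: "0 < m" "(L^^m) q = q"
    using LeastI[of "\<lambda>m. 0 < m \<and> (L^^m) q = q", OF conjI[OF period]] by (simp_all add: m_def)
  have m_min: "(L^^k) q \<noteq> q" if "0 < k" "k < m" for k
    using that not_less_Least[of k "\<lambda>m. 0 < m \<and> (L^^m) q = q"] by (simp add: m_def)
  have "(L^^i) q \<noteq> (L^^j) q" if "i < j" "j < m" for i j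
  proof
    assume "(L^^i) q = (L^^j) q"
    then have "(L^^(m - j + i)) q = (L^^(m - j + j)) q"
      by (metis funpow_add_apply)
    then have "(L^^(m - j + i)) q = (L^^m) q"
      using that by simp
    with m m_min[of "m - j + i"] that show False by simp
  qed
  then have distinct: "distinct (map (\<lambda>i. (L^^i) q) [0..<m])"
    unfolding distinct_conv_nth by (simp add: nat_neq_iff) (metis)
  have "L ((L^^i) q) \<noteq> (L^^i) q" if "i < m" for i
    using funpow_fixpoint_stable[of L i q m] that m moving by auto
  then have walk: "is_walk E (map (\<lambda>i. (L^^i) q) [0..<Suc (m - 1)])"
    by (intro tree_links_orbit_walk[OF L q]) simp
  have "m \<noteq> 1" "m \<noteq> 2"
    using m moving L q by (auto simp: numeral_2_eq_2 tree_links_def)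
  then have "3 \<le> length (map (\<lambda>i. (L^^i) q) [0..<m])"
    using m(1) by simp
  moreover have "E ((L^^(m - 1)) q) q"
    using tree_links_edge[OF L tree_links_funpow_in_V[OF L q], of "m - 1"]
    by (metis m Suc_pred' funpow.simps(2) comp_apply moving)
  then have "E (last (map (\<lambda>i. (L^^i) q) [0..<m])) (hd (map (\<lambda>i. (L^^i) q) [0..<m]))"
    using m(1) by (simp add: last_map hd_map)
  ultimately show False
    using no_cycle[OF distinct] walk m(1) by simp
qed

lemma tree_links_repeat_imp_fixed:
  assumes L: "tree_links V E L" and q: "q \<in> V" and "i < j" "(L^^i) q = (L^^j) q"
  shows "L ((L^^i) q) = (L^^i) q"
proof -
  have "(L^^(j - i)) ((L^^i) q) = (L^^(j - i + i)) q"
    by (rule funpow_add_apply)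
  then have "(L^^(j - i)) ((L^^i) q) = (L^^i) q"
    using assms(3,4) by simp
  then show ?thesis
    using tree_links_periodic_imp_fixed[OF L tree_links_funpow_in_V[OF L q], of "j - i"] assms(3)
    by simp
qed

lemma tree_links_orbit_distinct:
  assumes L: "tree_links V E L" and q: "q \<in> V"
    and moving: "\<And>i. i < m \<Longrightarrow> L ((L^^i) q) \<noteq> (L^^i) q"
  shows "distinct (map (\<lambda>i. (L^^i) q) [0..<Suc m])"
proof -
  have "(L^^i) q \<noteq> (L^^j) q" if "i < j" "j \<le> m" for i j
    using tree_links_repeat_imp_fixed[OF L q that(1)] moving[of i] that by auto
  then show ?thesis
    unfolding distinct_conv_nth by (simp del: upt_Suc add: nat_neq_iff) (metis less_Suc_eq_le)
qed

lemma tree_links_never_returns: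
  assumes L: "tree_links V E L" and v: "v \<in> V" and moving: "L v \<noteq> v"
  shows "(L^^k) (L v) \<noteq> v"
proof
  assume "(L^^k) (L v) = v"
  then have "(L^^Suc k) v = v" by (simp add: funpow_swap1)
  then show False
    using tree_links_periodic_imp_fixed[OF L v, of "Suc k"] moving by simp
qed

lemma tree_links_never_reaches_unlinked_neighbour:
  assumes L: "tree_links V E L" and xu: "E x u" "L x \<noteq> u"
  shows "(L^^k) x \<noteq> u"
proof
  assume "(L^^k) x = u"
  define k0 where "k0 = (LEAST k. (L^^k) x = u)"
  have k0: "(L^^k0) x = u" and k0_min: "\<And>i. i < k0 \<Longrightarrow> (L^^i) x \<noteq> u"
    using LeastI[of "\<lambda>k. (L^^k) x = u", OF \<open>(L^^k) x = u\<close>] not_less_Least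
    by (auto simp: k0_def)
  have x: "x \<in> V" using edge_in_V xu by blast
  have moving: "L ((L^^i) x) \<noteq> (L^^i) x" if "i < k0" for i
    using funpow_fixpoint_stable[of L i x k0] that k0 k0_min by fastforce
  have "k0 \<noteq> 0" using k0 xu(1) edge_irrefl by (metis funpow_0)
  moreover have "k0 \<noteq> 1" using k0 xu(2) by auto
  moreover have "E (last (map (\<lambda>i. (L^^i) x) [0..<Suc k0])) (hd (map (\<lambda>i. (L^^i) x) [0..<Suc k0]))"
    using k0 edge_sym[OF xu(1)] by (simp del: upt_Suc add: last_map hd_map)
  ultimately show False
    using no_cycle[OF tree_links_orbit_distinct[OF L x, where m = k0, OF moving]
        tree_links_orbit_walk[OF L x, where m = k0, OF moving]]
    by simp
qed

lemma sink_fixed: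
  assumes L: "tree_links V E L" and q: "q \<in> V"
  shows "L (sink V L q) = sink V L q"
proof (rule ccontr)
  assume "L (sink V L q) \<noteq> sink V L q"
  then have "L ((L^^i) q) \<noteq> (L^^i) q" if "i < card V" for i
    using funpow_fixpoint_stable[of L i q "card V"] that by (auto simp: sink_def)
  then have "distinct (map (\<lambda>i. (L^^i) q) [0..<Suc (card V)])"
    by (rule tree_links_orbit_distinct[OF L q])
  then have "Suc (card V) = card (set (map (\<lambda>i. (L^^i) q) [0..<Suc (card V)]))"
    by (metis distinct_card length_map length_upt minus_nat.diff_0)
  also have "\<dots> \<le> card V"
    using tree_links_funpow_in_V[OF L q] by (intro card_mono[OF finite_V]) auto
  finally show False
    by simp
qed

lemma sink_in_V: "tree_links V E L \<Longrightarrow> q \<in> V \<Longrightarrow> sink V L q \<in> V"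
  unfolding sink_def by (rule tree_links_funpow_in_V)

lemma sink_link: "tree_links V E L \<Longrightarrow> q \<in> V \<Longrightarrow> sink V L (L q) = sink V L q"
  using sink_fixed unfolding sink_def by (metis funpow_swap1)

lemma sink_funpow: "tree_links V E L \<Longrightarrow> q \<in> V \<Longrightarrow> sink V L ((L^^k) q) = sink V L q"
  by (induction k) (auto simp: sink_link tree_links_funpow_in_V)

lemma sink_eq_self: "L q = q \<Longrightarrow> sink V L q = q"
  unfolding sink_def by (rule funpow_fixpoint)

lemma sink_update_unreached:
  assumes "\<And>k. (L^^k) q \<noteq> u"
  shows "sink V (L(u := v)) q = sink V L q"
proof -
  have "((L(u := v))^^k) q = (L^^k) q" for k
    using assms by (induction k) auto
  then show ?thesis by (simp add: sink_def)
qed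

lemma sink_update_reached:
  assumes L': "tree_links V E (L(u := v))" and q: "q \<in> V" and "(L^^k) q = u"
  shows "sink V (L(u := v)) q = sink V (L(u := v)) u"
proof -
  define k0 where "k0 = (LEAST k. (L^^k) q = u)"
  have k0: "(L^^k0) q = u" and k0_min: "\<And>i. i < k0 \<Longrightarrow> (L^^i) q \<noteq> u"
    using LeastI[of "\<lambda>k. (L^^k) q = u", OF assms(3)] not_less_Least by (auto simp: k0_def)
  have "i \<le> k0 \<Longrightarrow> ((L(u := v))^^i) q = (L^^i) q" for i
    using k0_min by (induction i) auto
  then have "((L(u := v))^^k0) q = u" using k0 by simp
  then show ?thesis using sink_funpow[OF L' q, of k0] by simp
qed

lemma sink_update_self_cases:
  assumes L: "tree_links V E L" and L': "tree_links V E (L(v := v))" and q: "q \<in> V"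
  shows "sink V (L(v := v)) q = sink V L q \<and> sink V L q \<noteq> v \<or>
    sink V (L(v := v)) q = v \<and> sink V L q = sink V L v"
proof (cases "\<exists>k. (L^^k) q = v")
  case True
  then obtain k where k: "(L^^k) q = v" by blast
  have "sink V (L(v := v)) q = v"
    using sink_update_reached[OF L' q k] sink_eq_self[of "L(v := v)" v] by simp
  moreover have "sink V L q = sink V L v"
    using sink_funpow[OF L q, of k] k by simp
  ultimately show ?thesis by simp
next
  case False
  then show ?thesis
    using sink_update_unreached[of L q v v] unfolding sink_def by blast
qed

lemma sink_update_neighbour_cases:
  assumes L: "tree_links V E L" and L': "tree_links V E (L(u := x))"
    and xu: "E x u" "L x \<noteq> u" and q: "q \<in> V"
  shows "sink V (L(u := x)) q = sink V L q \<or>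
    sink V (L(u := x)) q = sink V L x \<and> sink V L q = sink V L u"
proof (cases "\<exists>k. (L^^k) q = u")
  case True
  then obtain k where k: "(L^^k) q = u" by blast
  have u: "u \<in> V" using edge_in_V xu(1) by blast
  have "sink V (L(u := x)) q = sink V (L(u := x)) u"
    by (rule sink_update_reached[OF L' q k])
  also have "\<dots> = sink V (L(u := x)) x"
    using sink_link[OF L' u] by simp
  also have "\<dots> = sink V L x"
    using tree_links_never_reaches_unlinked_neighbour[OF L xu] by (rule sink_update_unreached)
  finally show ?thesis
    using sink_funpow[OF L q, of k] k by simp
next
  case False
  then show ?thesis using sink_update_unreached by blast
qed

lemma tree_links_update_self:
  assumes L: "tree_links V E L" and v: "v \<in> V"
  shows "tree_links V E (L(v := v))"
  using L v unfolding tree_links_def by auto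

lemma tree_links_update_neighbour:
  assumes L: "tree_links V E L" and xu: "E x u" "L x \<noteq> u"
  shows "tree_links V E (L(u := x))"
  using L xu edge_in_V[OF xu(1)] edge_sym[OF xu(1)] edge_irrefl unfolding tree_links_def by auto

lemma sink_neq_if_unlinked_edge:
  assumes L: "tree_links V E L" and xy: "E x y" "L x \<noteq> y" "L y \<noteq> x"
  shows "sink V L x \<noteq> sink V L y"
proof
  assume "sink V L x = sink V L y"
  then obtain i0 j0 where meet: "(L^^i0) x = (L^^j0) y"
    and x_moving: "\<And>i. i < i0 \<Longrightarrow> L ((L^^i) x) \<noteq> (L^^i) x"
    and y_moving: "\<And>j. j < j0 \<Longrightarrow> L ((L^^j) y) \<noteq> (L^^j) y"
    and disjoint: "\<And>i j. i \<le> i0 \<Longrightarrow> j < j0 \<Longrightarrow> (L^^i) x \<noteq> (L^^j) y"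
    unfolding sink_def by (rule link_paths_first_meeting) blast
  have x: "x \<in> V" and y: "y \<in> V" using edge_in_V xy by auto
  let ?xs = "map (\<lambda>i. (L^^i) x) [0..<Suc i0]" and ?ys = "map (\<lambda>j. (L^^j) y) [0..<j0]"
  have "set ?xs \<inter> set ?ys = {}"
    using disjoint by (auto simp del: upt_Suc simp add: less_Suc_eq_le)
  moreover have "distinct ?ys"
    using tree_links_orbit_distinct[OF L y y_moving] by simp
  ultimately have "distinct (?xs @ rev ?ys)"
    using tree_links_orbit_distinct[OF L x x_moving] by (simp del: upt_Suc)
  moreover have "is_walk E (?xs @ rev ?ys)"
  proof (cases j0)
    case (Suc j)
    have "E (L ((L^^j) y)) ((L^^j) y)"
      using edge_sym tree_links_edge[OF L tree_links_funpow_in_V[OF L y] y_moving] Suc by simp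
    then have "E (last ?xs) (hd (rev ?ys))"
      using meet Suc by (simp del: upt_Suc add: last_map hd_rev)
    then show ?thesis
      using tree_links_orbit_walk[OF L x x_moving] Suc
        is_walk_rev[OF tree_links_orbit_walk[OF L y, of j]] y_moving
      by (intro is_walk_append) auto
  qed (use tree_links_orbit_walk[OF L x x_moving] in simp)
  moreover have "E (last (?xs @ rev ?ys)) (hd (?xs @ rev ?ys))"
    using meet edge_sym[OF xy(1)] by (cases j0) (simp_all del: upt_Suc add: hd_map last_map last_rev)
  moreover have "3 \<le> length (?xs @ rev ?ys)"
  proof -
    have "i0 = 0 \<Longrightarrow> j0 = 0 \<Longrightarrow> False" using meet xy(1) edge_irrefl by simp
    moreover have "i0 = 0 \<Longrightarrow> j0 = 1 \<Longrightarrow> False" using meet xy(3) by simp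
    moreover have "i0 = 1 \<Longrightarrow> j0 = 0 \<Longrightarrow> False" using meet xy(2) by simp
    ultimately show ?thesis by (simp del: upt_Suc) presburger
  qed
  ultimately show False
    by (rule no_cycle)
qed

end

section \<open>Single steps of the protocol\<close>

lemma step_Issue [simp]:
  "clk (step node time s (Issue r)) = time r"
  "lst (step node time s (Issue r)) = (lst s)(node r := r)"
  "iss (step node time s (Issue r)) = insert r (iss s)"
  "vis (step node time s (Issue r)) = (vis s)(r := (vis s r)(node r := Some (time r)))"
  "lnk (step node time s (Issue r)) = (lnk s)(node r := node r)"
  "trans (step node time s (Issue r)) = (if lnk s (node r) = node r then trans s
     else insert (r, node r, lnk s (node r), time r) (trans s))"
  "prd (step node time s (Issue r)) = (if lnk s (node r) = node r
     then (prd s)(r := Some (lst s (node r))) else prd s)"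
  by (simp_all add: Let_def fun_upd_idem)

lemma step_Deliver [simp]:
  "clk (step node time s (Deliver (r, x, u, \<sigma>) \<tau>)) = \<tau>"
  "lst (step node time s (Deliver (r, x, u, \<sigma>) \<tau>)) = lst s"
  "iss (step node time s (Deliver (r, x, u, \<sigma>) \<tau>)) = iss s"
  "vis (step node time s (Deliver (r, x, u, \<sigma>) \<tau>)) = (vis s)(r := (vis s r)(u := Some \<tau>))"
  "lnk (step node time s (Deliver (r, x, u, \<sigma>) \<tau>)) = (lnk s)(u := x)"
  "trans (step node time s (Deliver (r, x, u, \<sigma>) \<tau>)) = (if lnk s u = u then trans s - {(r, x, u, \<sigma>)}
     else insert (r, u, lnk s u, \<tau>) (trans s - {(r, x, u, \<sigma>)}))"
  "prd (step node time s (Deliver (r, x, u, \<sigma>) \<tau>)) = (if lnk s u = u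
     then (prd s)(r := Some (lst s u)) else prd s)"
  by (simp_all add: Let_def)

declare step.simps [simp del]

lemma trans_step_removed:
  assumes "m \<in> trans s" "m \<notin> trans (step node time s e)"
  shows "\<exists>\<tau>. e = Deliver m \<tau>"
proof (cases e)
  case (Deliver m' \<tau>)
  then show ?thesis using assms by (cases m') (auto split: if_splits)
qed (use assms in \<open>auto split: if_splits\<close>)

lemma iss_step:
  "iss (step node time s e) = iss s \<or> (\<exists>r. e = Issue r \<and> iss (step node time s e) = insert r (iss s))"
  by (cases e) auto

lemma valid_run_enabled:
  "valid_run w R r0 node time s es \<Longrightarrow> k < length es \<Longrightarrow>
     enabled w R r0 time (foldl (step node time) s (take k es)) (es!k)"
  by (induction es arbitrary: s k) (auto simp: nth_Cons split: nat.split)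

definition transit_unique :: "('r \<times> 'v \<times> 'v \<times> real) set \<Rightarrow> bool" where
  "transit_unique T \<longleftrightarrow> (\<forall>r x y \<sigma> r' x' y' \<sigma>'. (r, x, y, \<sigma>) \<in> T \<longrightarrow> (r', x', y', \<sigma>') \<in> T \<longrightarrow>
     r = r' \<or> (x = x' \<and> y = y') \<or> (x = y' \<and> y = x') \<longrightarrow> (r, x, y, \<sigma>) = (r', x', y', \<sigma>'))"

lemma transit_unique_subset: "transit_unique T \<Longrightarrow> T' \<subseteq> T \<Longrightarrow> transit_unique T'"
  unfolding transit_unique_def by blast

lemma transit_unique_insert:
  assumes "transit_unique T"
    and "\<And>r' x' y' \<sigma>'. (r', x', y', \<sigma>') \<in> T \<Longrightarrow> r' \<noteq> r \<and> \<not> (x' = x \<and> y' = y) \<and> \<not> (x' = y \<and> y' = x)"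
  shows "transit_unique (insert (r, x, y, \<sigma>) T)"
  using assms unfolding transit_unique_def by (simp only: insert_iff) blast

section \<open>The protocol invariant\<close>

locale arrow_system = wtree V E w
  for V :: "'v set" and E and w +
  fixes R :: "'r set" and r0 :: 'r and node :: "'r \<Rightarrow> 'v" and time :: "'r \<Rightarrow> real"
    and lnk0 :: "'v \<Rightarrow> 'v"
  assumes arrow_requests: "arrow_requests V R r0 node time"
    and initial_links: "initial_links V E w (node r0) lnk0"
begin

lemma node_in_V: "r \<in> R \<Longrightarrow> node r \<in> V"
  using arrow_requests by (simp add: arrow_requests_def)

lemma r0_in_R: "r0 \<in> R"
  using arrow_requests by (simp add: arrow_requests_def)

lemma time_r0: "time r0 = 0"
  using arrow_requests by (simp add: arrow_requests_def)

lemma time_nonneg: "r \<in> R \<Longrightarrow> 0 \<le> time r"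
  using arrow_requests by (simp add: arrow_requests_def)

lemma initial_link_root: "lnk0 (node r0) = node r0"
  using initial_links by (simp add: initial_links_def)

lemma initial_link_edge: "u \<in> V \<Longrightarrow> u \<noteq> node r0 \<Longrightarrow> E u (lnk0 u)"
  using initial_links by (simp add: initial_links_def)

lemma initial_tree_links: "tree_links V E lnk0"
  unfolding tree_links_def
proof (intro ballI conjI impI)
  fix x assume x: "x \<in> V"
  show "E x (lnk0 x)" if "lnk0 x \<noteq> x"
    using that x initial_link_root initial_link_edge by metis
  then show "lnk0 x \<in> V"
    using x edge_in_V by metis
  show "lnk0 x = x" if swap: "lnk0 (lnk0 x) = x"
  proof (rule ccontr)
    assume "lnk0 x \<noteq> x"
    then have "x \<noteq> node r0" "lnk0 x \<noteq> node r0" "E x (lnk0 x)"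
      using swap initial_link_root initial_link_edge[OF x] by auto
    moreover have "lnk0 x \<in> V" using \<open>E x (lnk0 x)\<close> edge_in_V by blast
    ultimately have "tree_dist E w x (node r0) = w x (lnk0 x) + w (lnk0 x) x + tree_dist E w x (node r0)"
      using initial_links x swap unfolding initial_links_def by (metis add.assoc)
    then show False
      using weight_pos[OF \<open>E x (lnk0 x)\<close>] weight_pos[OF edge_sym[OF \<open>E x (lnk0 x)\<close>]] by simp
  qed
qed

lemma initial_sink: "q \<in> V \<Longrightarrow> sink V lnk0 q = node r0"
  using sink_in_V[OF initial_tree_links] sink_fixed[OF initial_tree_links]
    initial_link_edge edge_irrefl by metis

definition transit_ok :: "('v, 'r) arrow_state \<Rightarrow> bool" where
  "transit_ok s \<longleftrightarrow> (\<forall>r x y \<sigma>. (r, x, y, \<sigma>) \<in> trans s \<longrightarrow>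
     E x y \<and> lnk s x \<noteq> y \<and> lnk s y \<noteq> x \<and> r \<in> iss s \<and> prd s r = None \<and> \<sigma> \<le> clk s)"

(* With transit_ok and transit_unique: every edge is oriented by exactly one of a link in
   either direction or a single find message crossing it. *)
definition edges_covered :: "('v, 'r) arrow_state \<Rightarrow> bool" where
  "edges_covered s \<longleftrightarrow> (\<forall>x y. E x y \<longrightarrow>
     lnk s x = y \<or> lnk s y = x \<or> (\<exists>r \<sigma>. (r, x, y, \<sigma>) \<in> trans s \<or> (r, y, x, \<sigma>) \<in> trans s))"

definition last_ok :: "('v, 'r) arrow_state \<Rightarrow> bool" where
  "last_ok s \<longleftrightarrow> (\<forall>z\<in>V. (lnk s z = z \<longrightarrow> node (lst s z) = z) \<and> (lst s z \<in> iss s \<or> lst s z = r0))"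

definition requests_ok :: "('v, 'r) arrow_state \<Rightarrow> bool" where
  "requests_ok s \<longleftrightarrow> iss s \<subseteq> R - {r0} \<and>
     (\<forall>c a. prd s c = Some a \<longrightarrow> c \<in> iss s \<and> (a \<in> iss s \<or> a = r0) \<and> vis s c (node a) \<noteq> None) \<and>
     (\<forall>r u. vis s r u \<noteq> None \<longrightarrow> u \<in> V)"

definition protocol_inv :: "('v, 'r) arrow_state \<Rightarrow> bool" where
  "protocol_inv s \<longleftrightarrow> tree_links V E (lnk s) \<and> transit_ok s \<and> transit_unique (trans s) \<and>
     edges_covered s \<and> last_ok s \<and> requests_ok s"

lemma transitD:
  "protocol_inv s \<Longrightarrow> (r, x, y, \<sigma>) \<in> trans s \<Longrightarrow>
     E x y \<and> lnk s x \<noteq> y \<and> lnk s y \<noteq> x \<and> r \<in> iss s \<and> prd s r = None \<and> \<sigma> \<le> clk s"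
  unfolding protocol_inv_def transit_ok_def by blast

lemma transit_prd: "protocol_inv s \<Longrightarrow> (r, x, y, \<sigma>) \<in> trans s \<Longrightarrow> prd s r = None"
  using transitD by blast

lemma transit_issued: "protocol_inv s \<Longrightarrow> (r, x, y, \<sigma>) \<in> trans s \<Longrightarrow> r \<in> iss s"
  using transitD by blast

lemma transit_not_along_link:
  "protocol_inv s \<Longrightarrow> (r, v, lnk s v, \<sigma>) \<notin> trans s"
  "protocol_inv s \<Longrightarrow> (r, lnk s v, v, \<sigma>) \<notin> trans s"
  using transitD by blast+

lemma transit_uniqueD:
  "protocol_inv s \<Longrightarrow> (r, x, y, \<sigma>) \<in> trans s \<Longrightarrow> (r', x', y', \<sigma>') \<in> trans s \<Longrightarrow>
     r = r' \<or> (x = x' \<and> y = y') \<or> (x = y' \<and> y = x') \<Longrightarrow> (r, x, y, \<sigma>) = (r', x', y', \<sigma>')"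
  unfolding protocol_inv_def transit_unique_def by blast

lemma prd_issued: "protocol_inv s \<Longrightarrow> prd s c = Some a \<Longrightarrow> c \<in> iss s"
  unfolding protocol_inv_def requests_ok_def by blast

lemma issued_in_R: "protocol_inv s \<Longrightarrow> c \<in> iss s \<Longrightarrow> c \<in> R"
  unfolding protocol_inv_def requests_ok_def by blast

lemma prd_visited: "protocol_inv s \<Longrightarrow> prd s c = Some p \<Longrightarrow> vis s c (node p) \<noteq> None"
  unfolding protocol_inv_def requests_ok_def by blast

lemma visited_in_V: "protocol_inv s \<Longrightarrow> vis s c q \<noteq> None \<Longrightarrow> q \<in> V"
  unfolding protocol_inv_def requests_ok_def by blast

lemma protocol_inv_init: "protocol_inv (init_state lnk0 r0)"
proof -
  have "lnk0 x = y \<or> lnk0 y = x" if "E x y" for x y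
    using sink_neq_if_unlinked_edge[OF initial_tree_links that] initial_sink edge_in_V[OF that]
    by metis
  moreover have "node r0 = z" if "z \<in> V" "lnk0 z = z" for z
    using that initial_link_edge edge_irrefl by metis
  ultimately show ?thesis
    using initial_tree_links
    by (auto simp: init_state_def protocol_inv_def transit_ok_def transit_unique_def
        edges_covered_def last_ok_def requests_ok_def)
qed

lemma clk_step_ge: "enabled w R r0 time s e \<Longrightarrow> clk s \<le> clk (step node time s e)"
  by (cases e) auto

lemma vis_step_mono: "vis s c q \<noteq> None \<Longrightarrow> vis (step node time s e) c q \<noteq> None"
  by (cases e) auto

lemma links_step:
  assumes inv: "protocol_inv s" and en: "enabled w R r0 time s e"
  shows "tree_links V E (lnk (step node time s e))"
proof (cases e)
  case (Issue r)
  then show ?thesis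
    using inv en node_in_V tree_links_update_self by (simp add: protocol_inv_def)
next
  case (Deliver m \<tau>)
  then obtain r x u \<sigma> where e: "e = Deliver (r, x, u, \<sigma>) \<tau>" by (cases m) auto
  then have "(r, x, u, \<sigma>) \<in> trans s" using en by simp
  then show ?thesis
    using e inv transitD[OF inv] tree_links_update_neighbour by (simp add: protocol_inv_def)
qed

lemma transit_ok_Issue:
  assumes inv: "protocol_inv s" and en: "enabled w R r0 time s (Issue r)"
  shows "transit_ok (step node time s (Issue r))"
  unfolding transit_ok_def
proof (intro allI impI)
  let ?v = "node r" and ?s' = "step node time s (Issue r)"
  have L: "tree_links V E (lnk s)" using inv by (simp add: protocol_inv_def)
  have r: "r \<notin> iss s" "clk s \<le> time r" "?v \<in> V" using en node_in_V by auto
  fix r' x y \<sigma> assume "(r', x, y, \<sigma>) \<in> trans ?s'"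
  then consider (old) "(r', x, y, \<sigma>) \<in> trans s"
    | (sent) "lnk s ?v \<noteq> ?v" "(r', x, y, \<sigma>) = (r, ?v, lnk s ?v, time r)"
    by (auto split: if_splits)
  then show "E x y \<and> lnk ?s' x \<noteq> y \<and> lnk ?s' y \<noteq> x \<and> r' \<in> iss ?s' \<and> prd ?s' r' = None \<and>
      \<sigma> \<le> clk ?s'"
  proof cases
    case old
    then show ?thesis
      using transitD[OF inv old] r edge_irrefl by auto
  next
    case sent
    have "prd s r = None" using prd_issued[OF inv] r(1) by fastforce
    then show ?thesis
      using sent r tree_links_edge[OF L r(3)] tree_links_no_swap[OF L r(3)] by auto
  qed
qed

lemma transit_ok_Deliver:
  assumes inv: "protocol_inv s" and en: "enabled w R r0 time s (Deliver (r, x, u, \<sigma>) \<tau>)"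
  shows "transit_ok (step node time s (Deliver (r, x, u, \<sigma>) \<tau>))"
  unfolding transit_ok_def
proof (intro allI impI)
  let ?m = "(r, x, u, \<sigma>)" and ?s' = "step node time s (Deliver (r, x, u, \<sigma>) \<tau>)"
  have L: "tree_links V E (lnk s)" using inv by (simp add: protocol_inv_def)
  have m: "?m \<in> trans s" "clk s \<le> \<tau>" using en by auto
  fix r' x' y' \<sigma>' assume "(r', x', y', \<sigma>') \<in> trans ?s'"
  then consider (old) "(r', x', y', \<sigma>') \<in> trans s" "(r', x', y', \<sigma>') \<noteq> ?m"
    | (sent) "lnk s u \<noteq> u" "(r', x', y', \<sigma>') = (r, u, lnk s u, \<tau>)"
    by (auto split: if_splits)
  then show "E x' y' \<and> lnk ?s' x' \<noteq> y' \<and> lnk ?s' y' \<noteq> x' \<and> r' \<in> iss ?s' \<and>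
      prd ?s' r' = None \<and> \<sigma>' \<le> clk ?s'"
  proof cases
    case old
    then have "r' \<noteq> r" "\<not> (x' = x \<and> y' = u)" "\<not> (x' = u \<and> y' = x)"
      using transit_uniqueD[OF inv m(1) old(1)] by auto
    then show ?thesis
      using m transitD[OF inv old(1)] by auto
  next
    case sent
    have "u \<in> V" using transitD[OF inv m(1)] edge_in_V by blast
    then show ?thesis
      using sent m transitD[OF inv m(1)] tree_links_edge[OF L] tree_links_no_swap[OF L]
      by auto
  qed
qed

lemma transit_ok_step:
  assumes "protocol_inv s" and "enabled w R r0 time s e"
  shows "transit_ok (step node time s e)"
proof (cases e)
  case (Deliver m \<tau>)
  then show ?thesis
    using assms transit_ok_Deliver by (cases m) auto
qed (use assms transit_ok_Issue in auto)

lemma transit_unique_step: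
  assumes inv: "protocol_inv s" and en: "enabled w R r0 time s e"
  shows "transit_unique (trans (step node time s e))"
proof -
  have uniq: "transit_unique (trans s)" using inv by (simp add: protocol_inv_def)
  show ?thesis
  proof (cases e)
    case (Issue r)
    have "r \<notin> iss s" using en Issue by simp
    then have "r' \<noteq> r" if "(r', x', y', \<sigma>') \<in> trans s" for r' x' y' \<sigma>'
      using transitD[OF inv that] by auto
    then show ?thesis
      using Issue uniq transit_not_along_link[OF inv] by (auto intro!: transit_unique_insert)
  next
    case (Deliver m \<tau>)
    then obtain r x u \<sigma> where e: "e = Deliver (r, x, u, \<sigma>) \<tau>" by (cases m) auto
    have m: "(r, x, u, \<sigma>) \<in> trans s" using en e by simp
    have "r' \<noteq> r" if "(r', x', y', \<sigma>') \<in> trans s - {(r, x, u, \<sigma>)}" for r' x' y' \<sigma>'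
      using transit_uniqueD[OF inv m] that by blast
    moreover have "transit_unique (trans s - {(r, x, u, \<sigma>)})"
      using uniq by (rule transit_unique_subset) blast
    ultimately show ?thesis
      using e transit_not_along_link[OF inv] by (auto intro!: transit_unique_insert)
  qed
qed

lemma edges_covered_step:
  assumes inv: "protocol_inv s" and en: "enabled w R r0 time s e"
  shows "edges_covered (step node time s e)"
  unfolding edges_covered_def
proof (intro allI impI)
  fix a b assume ab: "E a b"
  let ?s' = "step node time s e"
  have cov: "lnk s a = b \<or> lnk s b = a \<or> (\<exists>r' \<sigma>'. (r', a, b, \<sigma>') \<in> trans s \<or> (r', b, a, \<sigma>') \<in> trans s)"
    using inv ab unfolding protocol_inv_def edges_covered_def by blast
  have "a \<noteq> b" using ab edge_irrefl by blast
  show "lnk ?s' a = b \<or> lnk ?s' b = a \<or> (\<exists>r' \<sigma>'. (r', a, b, \<sigma>') \<in> trans ?s' \<or> (r', b, a, \<sigma>') \<in> trans ?s')"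
  proof (cases e)
    case (Issue r)
    then show ?thesis using cov \<open>a \<noteq> b\<close> by auto
  next
    case (Deliver m \<tau>)
    then obtain r x u \<sigma> where e: "e = Deliver (r, x, u, \<sigma>) \<tau>" by (cases m) auto
    then show ?thesis using cov \<open>a \<noteq> b\<close> by auto
  qed
qed

lemma last_ok_step:
  assumes inv: "protocol_inv s" and en: "enabled w R r0 time s e"
  shows "last_ok (step node time s e)"
proof (cases e)
  case (Issue r)
  then show ?thesis using inv by (auto simp: protocol_inv_def last_ok_def)
next
  case (Deliver m \<tau>)
  then obtain r x u \<sigma> where e: "e = Deliver (r, x, u, \<sigma>) \<tau>" by (cases m) auto
  have "x \<noteq> u" using en e transitD[OF inv] edge_irrefl by fastforce
  then show ?thesis using e inv by (auto simp: protocol_inv_def last_ok_def)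
qed

lemma requests_ok_step:
  assumes inv: "protocol_inv s" and en: "enabled w R r0 time s e"
  shows "requests_ok (step node time s e)"
proof (cases e)
  case (Issue r)
  have r: "r \<in> R" "r \<noteq> r0" "r \<notin> iss s" using en Issue by auto
  then have "prd s r = None" using prd_issued[OF inv] by fastforce
  then show ?thesis
    using Issue r inv node_in_V[OF r(1)] vis_step_mono[of s, where e = e]
    by (auto simp: protocol_inv_def last_ok_def requests_ok_def)
next
  case (Deliver m \<tau>)
  then obtain r x u \<sigma> where e: "e = Deliver (r, x, u, \<sigma>) \<tau>" by (cases m) auto
  have "r \<in> iss s" "prd s r = None" "u \<in> V"
    using en e transitD[OF inv] edge_in_V by fastforce+
  then show ?thesis
    using e inv vis_step_mono[of s, where e = e]
    by (auto simp: protocol_inv_def last_ok_def requests_ok_def)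
qed

lemma protocol_inv_step:
  "protocol_inv s \<Longrightarrow> enabled w R r0 time s e \<Longrightarrow> protocol_inv (step node time s e)"
  using links_step transit_ok_step transit_unique_step edges_covered_step last_ok_step
    requests_ok_step
  by (simp add: protocol_inv_def)

end

section \<open>The queue graph\<close>

lemma rtrancl_avoid_source:
  assumes "(a, b) \<in> R\<^sup>*"
  shows "(a, b) \<in> {(c, d) \<in> R. c \<noteq> z}\<^sup>* \<or> (a, z) \<in> R\<^sup>*"
  using assms
proof (induction rule: rtrancl_induct)
  case (step b c)
  show ?case
  proof (cases "(a, z) \<in> R\<^sup>*")
    case False
    then have "b \<noteq> z" using step(1) by blast
    then show ?thesis
      using step False by (blast intro: rtrancl.rtrancl_into_rtrancl)
  qed simp
qed simp

lemma unique_predecessors_acyclic: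
  assumes unique: "\<And>a a' c. (a, c) \<in> R \<Longrightarrow> (a', c) \<in> R \<Longrightarrow> a = a'"
    and root: "\<And>a. (a, r) \<notin> R"
    and reach: "(r, c) \<in> R\<^sup>*"
  shows "(c, c) \<notin> R\<^sup>+"
  using reach
proof (induction rule: rtrancl_induct)
  case base
  then show ?case using root by (meson tranclD2)
next
  case (step b c)
  show ?case
  proof
    assume "(c, c) \<in> R\<^sup>+"
    then obtain a where "(c, a) \<in> R\<^sup>*" "(a, c) \<in> R"
      by (meson tranclD2)
    then have "a = b" using unique step(2) by blast
    then have "(b, b) \<in> R\<^sup>+"
      using \<open>(c, a) \<in> R\<^sup>*\<close> step(2) by (meson rtrancl_into_trancl2)
    then show False using step(3) by blast
  qed
qed

context arrow_system
begin

(* The request behind which a find message arriving at q would be queued if no link changed. *)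
definition tail :: "('v, 'r) arrow_state \<Rightarrow> 'v \<Rightarrow> 'r" where
  "tail s q = lst s (sink V (lnk s) q)"

definition queue_graph :: "('v, 'r) arrow_state \<Rightarrow> ('r \<times> 'r) set" where
  "queue_graph s = {(c, r). prd s r = Some c} \<union> {(tail s y, r) | r x y \<sigma>. (r, x, y, \<sigma>) \<in> trans s}"

(* Second conjunct: once the find message of r has left x, the requests queued at the end of
   the link path from x come after r. *)
definition queue_inv :: "('v, 'r) arrow_state \<Rightarrow> bool" where
  "queue_inv s \<longleftrightarrow> (\<forall>c. c \<in> iss s \<or> c = r0 \<longrightarrow> (r0, c) \<in> (queue_graph s)\<^sup>*) \<and>
     (\<forall>r x y \<sigma>. (r, x, y, \<sigma>) \<in> trans s \<longrightarrow> (r, tail s x) \<in> (queue_graph s)\<^sup>*)"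

definition queue_progress :: "('v, 'r) arrow_state \<Rightarrow> ('v, 'r) arrow_state \<Rightarrow> bool" where
  "queue_progress s s' \<longleftrightarrow>
     (\<forall>q\<in>V. (tail s q, tail s' q) \<in> (queue_graph s')\<^sup>*) \<and> queue_graph s \<subseteq> (queue_graph s')\<^sup>*"

lemma queue_graph_prd: "prd s r = Some c \<Longrightarrow> (c, r) \<in> queue_graph s"
  by (simp add: queue_graph_def)

lemma queue_graph_transit: "(r, x, y, \<sigma>) \<in> trans s \<Longrightarrow> (tail s y, r) \<in> queue_graph s"
  by (auto simp: queue_graph_def)

lemma queue_graph_iff:
  "(a, c) \<in> queue_graph s \<longleftrightarrow> prd s c = Some a \<or> (\<exists>x y \<sigma>. (c, x, y, \<sigma>) \<in> trans s \<and> a = tail s y)"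
  by (auto simp: queue_graph_def)

lemma queue_graph_unique_pred:
  assumes inv: "protocol_inv s" and "(a, c) \<in> queue_graph s" "(a', c) \<in> queue_graph s"
  shows "a = a'"
proof (cases "prd s c")
  case None
  then obtain x y \<sigma> x' y' \<sigma>' where m: "(c, x, y, \<sigma>) \<in> trans s" "a = tail s y"
    and m': "(c, x', y', \<sigma>') \<in> trans s" "a' = tail s y'"
    using assms(2,3) unfolding queue_graph_iff by auto
  then show ?thesis using transit_uniqueD[OF inv m(1) m'(1)] by simp
next
  case (Some p)
  then have "(c, x, y, \<sigma>) \<notin> trans s" for x y \<sigma>
    using transit_prd[OF inv] by fastforce
  then show ?thesis using assms(2,3) Some unfolding queue_graph_iff by auto
qed

lemma queue_graph_no_edge_to_root:
  assumes inv: "protocol_inv s"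
  shows "(a, r0) \<notin> queue_graph s"
proof -
  have "r0 \<notin> iss s" using inv by (auto simp: protocol_inv_def requests_ok_def)
  then show ?thesis
    using prd_issued[OF inv] transit_issued[OF inv] unfolding queue_graph_iff by blast
qed

lemma queue_graph_acyclic:
  assumes "protocol_inv s" "queue_inv s" "c \<in> iss s \<or> c = r0"
  shows "(c, c) \<notin> (queue_graph s)\<^sup>+"
  using assms queue_graph_unique_pred queue_graph_no_edge_to_root
  by (intro unique_predecessors_acyclic[where r = r0]) (auto simp: queue_inv_def)

lemma queue_inv_init: "queue_inv (init_state lnk0 r0)"
  by (simp add: queue_inv_def init_state_def)

lemma queue_inv_root_reaches:
  "queue_inv s \<Longrightarrow> c \<in> iss s \<or> c = r0 \<Longrightarrow> (r0, c) \<in> (queue_graph s)\<^sup>*"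
  by (auto simp: queue_inv_def)

lemma queue_inv_sender:
  "queue_inv s \<Longrightarrow> (r, x, y, \<sigma>) \<in> trans s \<Longrightarrow> (r, tail s x) \<in> (queue_graph s)\<^sup>*"
  unfolding queue_inv_def by fast

lemma tail_link: "protocol_inv s \<Longrightarrow> q \<in> V \<Longrightarrow> tail s (lnk s q) = tail s q"
  unfolding tail_def protocol_inv_def by (simp add: sink_link)

lemma tail_issued: "protocol_inv s \<Longrightarrow> q \<in> V \<Longrightarrow> tail s q \<in> iss s \<or> tail s q = r0"
  unfolding tail_def protocol_inv_def last_ok_def by (simp add: sink_in_V)

lemma tail_Issue:
  assumes inv: "protocol_inv s" and en: "enabled w R r0 time s (Issue r)" and q: "q \<in> V"
  shows "tail (step node time s (Issue r)) q = tail s q \<or>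
    tail (step node time s (Issue r)) q = r \<and> tail s q = tail s (node r)"
proof -
  have L: "tree_links V E (lnk s)" using inv by (simp add: protocol_inv_def)
  have L': "tree_links V E ((lnk s)(node r := node r))"
    using links_step[OF inv en] by simp
  show ?thesis
    using sink_update_self_cases[OF L L' q] by (auto simp: tail_def)
qed

lemma queue_edge_Issue:
  assumes inv: "protocol_inv s" and en: "enabled w R r0 time s (Issue r)"
  shows "(tail s (node r), r) \<in> queue_graph (step node time s (Issue r))"
proof (cases "lnk s (node r) = node r")
  case True
  then show ?thesis by (simp add: queue_graph_def tail_def sink_eq_self)
next
  case False
  let ?v = "node r" and ?p = "lnk s (node r)"
  have L: "tree_links V E (lnk s)" and v: "?v \<in> V"
    using inv en node_in_V by (auto simp: protocol_inv_def)
  have avoid: "((lnk s)^^k) ?p \<noteq> ?v" for k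
    using tree_links_never_returns[OF L v False] .
  then have "sink V ((lnk s)(?v := ?v)) ?p = sink V (lnk s) ?v"
    using sink_update_unreached[of "lnk s" ?p ?v ?v] sink_link[OF L v] by simp
  moreover have "sink V (lnk s) ?v \<noteq> ?v"
    using avoid sink_link[OF L v] unfolding sink_def by metis
  ultimately have "tail (step node time s (Issue r)) ?p = tail s ?v"
    by (simp add: tail_def)
  moreover have "(r, ?v, ?p, time r) \<in> trans (step node time s (Issue r))"
    using False by simp
  ultimately show ?thesis
    using queue_graph_transit by metis
qed

lemma tail_Deliver:
  assumes inv: "protocol_inv s" and en: "enabled w R r0 time s (Deliver (r, x, u, \<sigma>) \<tau>)"
  shows "q \<in> V \<Longrightarrow> tail (step node time s (Deliver (r, x, u, \<sigma>) \<tau>)) q = tail s q \<or>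
      tail (step node time s (Deliver (r, x, u, \<sigma>) \<tau>)) q = tail s x \<and> tail s q = tail s u"
    and "tail (step node time s (Deliver (r, x, u, \<sigma>) \<tau>)) u = tail s x"
proof -
  have L: "tree_links V E (lnk s)" using inv by (simp add: protocol_inv_def)
  have L': "tree_links V E ((lnk s)(u := x))"
    using links_step[OF inv en] by simp
  have xu: "E x u" "lnk s x \<noteq> u" using en transitD[OF inv] by auto
  then have u: "u \<in> V" using edge_in_V by blast
  show "q \<in> V \<Longrightarrow> tail (step node time s (Deliver (r, x, u, \<sigma>) \<tau>)) q = tail s q \<or>
      tail (step node time s (Deliver (r, x, u, \<sigma>) \<tau>)) q = tail s x \<and> tail s q = tail s u"
    using sink_update_neighbour_cases[OF L L' xu, of q] by (auto simp: tail_def)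
  have "sink V ((lnk s)(u := x)) x = sink V (lnk s) x"
    using tree_links_never_reaches_unlinked_neighbour[OF L xu] by (rule sink_update_unreached)
  then show "tail (step node time s (Deliver (r, x, u, \<sigma>) \<tau>)) u = tail s x"
    using sink_link[OF L' u] by (simp add: tail_def)
qed

lemma queue_edge_Deliver:
  assumes inv: "protocol_inv s" and en: "enabled w R r0 time s (Deliver (r, x, u, \<sigma>) \<tau>)"
  shows "(tail s u, r) \<in> queue_graph (step node time s (Deliver (r, x, u, \<sigma>) \<tau>))"
proof (cases "lnk s u = u")
  case True
  then show ?thesis by (simp add: queue_graph_def tail_def sink_eq_self)
next
  case False
  let ?z = "lnk s u"
  have L: "tree_links V E (lnk s)" using inv by (simp add: protocol_inv_def)
  have u: "u \<in> V" using en transitD[OF inv] edge_in_V by fastforce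
  have "sink V ((lnk s)(u := x)) ?z = sink V (lnk s) u"
    using tree_links_never_returns[OF L u False] sink_update_unreached[of "lnk s" ?z u x]
      sink_link[OF L u] by simp
  then have "tail (step node time s (Deliver (r, x, u, \<sigma>) \<tau>)) ?z = tail s u"
    by (simp add: tail_def)
  moreover have "(r, u, ?z, \<tau>) \<in> trans (step node time s (Deliver (r, x, u, \<sigma>) \<tau>))"
    using False by simp
  ultimately show ?thesis
    using queue_graph_transit by metis
qed

lemma queue_step_intro:
  assumes inv: "protocol_inv s" and qinv: "queue_inv s"
    and advance: "\<And>q. q \<in> V \<Longrightarrow> (tail s q, tail s' q) \<in> (queue_graph s')\<^sup>*"
    and prd_kept: "\<And>c a. prd s c = Some a \<Longrightarrow> prd s' c = Some a"
    and transit_kept: "\<And>r x y \<sigma>. (r, x, y, \<sigma>) \<in> trans s \<Longrightarrow> (tail s y, r) \<in> (queue_graph s')\<^sup>*"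
    and issued: "\<And>c. c \<in> iss s' \<Longrightarrow> c \<notin> iss s \<Longrightarrow>
      \<exists>b. (b \<in> iss s \<or> b = r0) \<and> (b, c) \<in> (queue_graph s')\<^sup>*"
    and sent: "\<And>r x y \<sigma>. (r, x, y, \<sigma>) \<in> trans s' \<Longrightarrow> (r, x, y, \<sigma>) \<notin> trans s \<Longrightarrow>
      (r, tail s' x) \<in> (queue_graph s')\<^sup>*"
  shows "queue_progress s s' \<and> queue_inv s'"
proof -
  have mono: "queue_graph s \<subseteq> (queue_graph s')\<^sup>*"
    using prd_kept transit_kept by (auto simp: queue_graph_def)
  then have mono_rtrancl: "(queue_graph s)\<^sup>* \<subseteq> (queue_graph s')\<^sup>*"
    by (rule rtrancl_subset_rtrancl)
  have reach: "(r0, c) \<in> (queue_graph s')\<^sup>*" if "c \<in> iss s \<or> c = r0" for c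
  proof -
    have "(r0, c) \<in> (queue_graph s)\<^sup>*" using queue_inv_root_reaches[OF qinv that] .
    then show ?thesis using mono_rtrancl by (rule subsetD[rotated])
  qed
  have "(r0, c) \<in> (queue_graph s')\<^sup>*" if "c \<in> iss s' \<or> c = r0" for c
  proof (cases "c \<in> iss s \<or> c = r0")
    case False
    with that have "c \<in> iss s'" "c \<notin> iss s" by auto
    then obtain b where "b \<in> iss s \<or> b = r0" "(b, c) \<in> (queue_graph s')\<^sup>*"
      using issued by metis
    then show ?thesis using reach rtrancl_trans by metis
  qed (rule reach)
  moreover have "(r, tail s' x) \<in> (queue_graph s')\<^sup>*" if m: "(r, x, y, \<sigma>) \<in> trans s'" for r x y \<sigma>
  proof (cases "(r, x, y, \<sigma>) \<in> trans s")
    case True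
    then have "(r, tail s x) \<in> (queue_graph s)\<^sup>*"
      by (rule queue_inv_sender[OF qinv])
    then have "(r, tail s x) \<in> (queue_graph s')\<^sup>*"
      using mono_rtrancl by (rule subsetD[rotated])
    moreover have "x \<in> V" using transitD[OF inv True] edge_in_V by blast
    ultimately show ?thesis using advance rtrancl_trans by metis
  qed (rule sent[OF m])
  ultimately show ?thesis
    using advance mono by (simp add: queue_progress_def queue_inv_def)
qed

lemma queue_step_Issue:
  assumes inv: "protocol_inv s" and qinv: "queue_inv s" and en: "enabled w R r0 time s (Issue r)"
  shows "queue_progress s (step node time s (Issue r)) \<and> queue_inv (step node time s (Issue r))"
proof (rule queue_step_intro[OF inv qinv])
  let ?s' = "step node time s (Issue r)" and ?v = "node r"
  have r: "r \<notin> iss s" "?v \<in> V" using en node_in_V by auto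
  note edge = queue_edge_Issue[OF inv en]
  show advance: "(tail s q, tail ?s' q) \<in> (queue_graph ?s')\<^sup>*" if "q \<in> V" for q
    using tail_Issue[OF inv en that] edge by auto
  show "prd ?s' c = Some a" if "prd s c = Some a" for c a
    using that prd_issued[OF inv] r(1) by auto
  show "(tail s y, r') \<in> (queue_graph ?s')\<^sup>*" if m: "(r', x, y, \<sigma>) \<in> trans s" for r' x y \<sigma>
  proof -
    have "(tail ?s' y, r') \<in> queue_graph ?s'"
      using m by (intro queue_graph_transit[where x = x and \<sigma> = \<sigma>]) simp
    moreover have "y \<in> V" using transitD[OF inv m] edge_in_V by blast
    ultimately show ?thesis using advance by (meson rtrancl.rtrancl_into_rtrancl)
  qed
  show "\<exists>b. (b \<in> iss s \<or> b = r0) \<and> (b, c) \<in> (queue_graph ?s')\<^sup>*"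
    if "c \<in> iss ?s'" "c \<notin> iss s" for c
    using that edge tail_issued[OF inv r(2)] by auto
  show "(r', tail ?s' x) \<in> (queue_graph ?s')\<^sup>*"
    if "(r', x, y, \<sigma>) \<in> trans ?s'" "(r', x, y, \<sigma>) \<notin> trans s" for r' x y \<sigma>
    using that by (auto simp: tail_def sink_eq_self split: if_splits)
qed

lemma queue_graph_Deliver_kept:
  assumes inv: "protocol_inv s" and en: "enabled w R r0 time s (Deliver (r, x, u, \<sigma>) \<tau>)"
    and edge: "(c, d) \<in> queue_graph s" and source: "c \<noteq> tail s u"
  shows "(c, d) \<in> queue_graph (step node time s (Deliver (r, x, u, \<sigma>) \<tau>))"
proof -
  let ?s' = "step node time s (Deliver (r, x, u, \<sigma>) \<tau>)"
  have "(r, x, u, \<sigma>) \<in> trans s" using en by simp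
  then have "prd s r = None" by (rule transit_prd[OF inv])
  then have prd_kept: "prd ?s' d = Some c" if "prd s d = Some c"
    using that by auto
  show ?thesis
  proof (cases "prd s d = Some c")
    case False
    then obtain x' y' \<sigma>' where m': "(d, x', y', \<sigma>') \<in> trans s" "c = tail s y'"
      using edge unfolding queue_graph_iff by blast
    then have "(d, x', y', \<sigma>') \<noteq> (r, x, u, \<sigma>)" using source by auto
    then have "(d, x', y', \<sigma>') \<in> trans ?s'" using m'(1) by auto
    moreover have "tail ?s' y' = tail s y'"
      using tail_Deliver(1)[OF inv en] transitD[OF inv m'(1)] edge_in_V source m'(2) by blast
    ultimately show ?thesis
      using m'(2) queue_graph_transit by metis
  qed (use prd_kept queue_graph_prd in blast)
qed

lemma queue_Deliver_sender_reaches: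
  assumes inv: "protocol_inv s" and qinv: "queue_inv s"
    and en: "enabled w R r0 time s (Deliver (r, x, u, \<sigma>) \<tau>)"
  shows "(r, tail s x) \<in> (queue_graph (step node time s (Deliver (r, x, u, \<sigma>) \<tau>)))\<^sup>*"
proof -
  let ?s' = "step node time s (Deliver (r, x, u, \<sigma>) \<tau>)"
  have m: "(r, x, u, \<sigma>) \<in> trans s" using en by simp
  have "(r, tail s x) \<in> {(c, d) \<in> queue_graph s. c \<noteq> tail s u}\<^sup>* \<or> (r, tail s u) \<in> (queue_graph s)\<^sup>*"
    using queue_inv_sender[OF qinv m] by (rule rtrancl_avoid_source)
  moreover have "(r, tail s u) \<notin> (queue_graph s)\<^sup>*"
  proof
    assume "(r, tail s u) \<in> (queue_graph s)\<^sup>*"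
    then have "(r, r) \<in> (queue_graph s)\<^sup>+"
      using queue_graph_transit[OF m] by (rule rtrancl_into_trancl1)
    then show False
      using queue_graph_acyclic[OF inv qinv] transit_issued[OF inv m] by blast
  qed
  moreover have "{(c, d) \<in> queue_graph s. c \<noteq> tail s u} \<subseteq> queue_graph ?s'"
    using queue_graph_Deliver_kept[OF inv en] by blast
  ultimately show ?thesis
    using rtrancl_mono by blast
qed

lemma queue_step_Deliver:
  assumes inv: "protocol_inv s" and qinv: "queue_inv s"
    and en: "enabled w R r0 time s (Deliver (r, x, u, \<sigma>) \<tau>)"
  shows "queue_progress s (step node time s (Deliver (r, x, u, \<sigma>) \<tau>)) \<and>
    queue_inv (step node time s (Deliver (r, x, u, \<sigma>) \<tau>))"
proof (rule queue_step_intro[OF inv qinv])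
  let ?s' = "step node time s (Deliver (r, x, u, \<sigma>) \<tau>)"
  note edge = queue_edge_Deliver[OF inv en]
  note sender = queue_Deliver_sender_reaches[OF inv qinv en]
  show advance: "(tail s q, tail ?s' q) \<in> (queue_graph ?s')\<^sup>*" if "q \<in> V" for q
    using tail_Deliver(1)[OF inv en that] edge sender
    by (auto intro: converse_rtrancl_into_rtrancl)
  have "(r, x, u, \<sigma>) \<in> trans s" using en by simp
  then show "prd ?s' c = Some a" if "prd s c = Some a" for c a
    using that transit_prd[OF inv] by auto
  show "(tail s y, r') \<in> (queue_graph ?s')\<^sup>*" if m: "(r', x', y, \<sigma>') \<in> trans s" for r' x' y \<sigma>'
  proof (cases "(r', x', y, \<sigma>') = (r, x, u, \<sigma>)")
    case False
    then have "(tail ?s' y, r') \<in> queue_graph ?s'"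
      using m by (intro queue_graph_transit[where x = x' and \<sigma> = \<sigma>']) auto
    moreover have "y \<in> V" using transitD[OF inv m] edge_in_V by blast
    ultimately show ?thesis using advance by (meson rtrancl.rtrancl_into_rtrancl)
  qed (use edge in auto)
  show "\<exists>b. (b \<in> iss s \<or> b = r0) \<and> (b, c) \<in> (queue_graph ?s')\<^sup>*"
    if "c \<in> iss ?s'" "c \<notin> iss s" for c
    using that by simp
  show "(r', tail ?s' x') \<in> (queue_graph ?s')\<^sup>*"
    if "(r', x', y, \<sigma>') \<in> trans ?s'" "(r', x', y, \<sigma>') \<notin> trans s" for r' x' y \<sigma>'
    using that tail_Deliver(2)[OF inv en] sender by (auto split: if_splits)
qed

definition event_visits :: "('v, 'r) arrow_event \<Rightarrow> 'r \<Rightarrow> 'v \<Rightarrow> real \<Rightarrow> bool" where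
  "event_visits e a u \<tau> \<longleftrightarrow>
     (e = Issue a \<and> u = node a \<and> \<tau> = time a) \<or> (\<exists>x \<sigma>. e = Deliver (a, x, u, \<sigma>) \<tau>)"

lemma vis_step:
  "vis (step node time s e) a u = vis s a u \<or>
   (\<exists>\<tau>. vis (step node time s e) a u = Some \<tau> \<and> event_visits e a u \<tau>)"
  by (cases e) (auto simp: event_visits_def split: if_splits)

lemma event_visits_clk: "event_visits e a u \<tau> \<Longrightarrow> clk (step node time s e) = \<tau>"
  by (auto simp: event_visits_def)

lemma event_visits_in_V:
  "protocol_inv s \<Longrightarrow> enabled w R r0 time s e \<Longrightarrow> event_visits e a u \<tau> \<Longrightarrow> u \<in> V"
  using node_in_V transitD edge_in_V by (fastforce simp: event_visits_def)

lemma queue_step: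
  assumes inv: "protocol_inv s" and qinv: "queue_inv s" and en: "enabled w R r0 time s e"
  shows "queue_progress s (step node time s e) \<and> queue_inv (step node time s e) \<and>
    (\<forall>a u \<tau>. event_visits e a u \<tau> \<longrightarrow> (tail s u, a) \<in> queue_graph (step node time s e))"
proof (cases e)
  case (Issue r)
  then show ?thesis
    using queue_step_Issue[OF inv qinv] queue_edge_Issue[OF inv] en
    by (auto simp: event_visits_def)
next
  case (Deliver m \<tau>)
  then obtain r x u \<sigma> where e: "e = Deliver (r, x, u, \<sigma>) \<tau>" by (cases m) auto
  then show ?thesis
    using queue_step_Deliver[OF inv qinv] queue_edge_Deliver[OF inv] en
    by (auto simp: event_visits_def)
qed

lemma boundary_message:
  assumes inv: "protocol_inv s" and qinv: "queue_inv s" and pq: "E p q"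
    and inside: "(b, tail s p) \<in> (queue_graph s)\<^sup>*" and outside: "(b, tail s q) \<notin> (queue_graph s)\<^sup>*"
  shows "\<exists>r \<sigma>. (r, p, q, \<sigma>) \<in> trans s"
proof -
  have "p \<in> V" "q \<in> V" using edge_in_V pq by auto
  consider "lnk s p = q" | "lnk s q = p" | r \<sigma> where "(r, p, q, \<sigma>) \<in> trans s"
    | r \<sigma> where "(r, q, p, \<sigma>) \<in> trans s"
    using inv pq unfolding protocol_inv_def edges_covered_def by blast
  then show ?thesis
  proof cases
    case 1
    then show ?thesis using tail_link[OF inv \<open>p \<in> V\<close>] inside outside by simp
  next
    case 2
    then show ?thesis using tail_link[OF inv \<open>q \<in> V\<close>] inside outside by simp
  next
    case (4 r \<sigma>)
    have "(b, r) \<in> (queue_graph s)\<^sup>*"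
      using inside queue_graph_transit[OF 4] by (rule rtrancl.rtrancl_into_rtrancl)
    then have "(b, tail s q) \<in> (queue_graph s)\<^sup>*"
      using queue_inv_sender[OF qinv 4] by (rule rtrancl_trans)
    with outside show ?thesis by contradiction
  qed blast
qed

lemma queue_before_subset: "queue_before R s \<subseteq> (queue_graph s)\<^sup>+"
  unfolding queue_before_def by (rule trancl_mono_subset) (auto intro: queue_graph_prd)

lemma queue_before_issued:
  assumes inv: "protocol_inv s" and ab: "(a, b) \<in> queue_before R s"
  shows "b \<in> iss s" "a \<in> iss s \<or> a = r0"
proof -
  obtain c where "prd s b = Some c" using ab unfolding queue_before_def by (auto dest: tranclD2)
  then show "b \<in> iss s" using prd_issued[OF inv] by blast
  obtain d where "prd s d = Some a" using ab unfolding queue_before_def by (auto dest: tranclD)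
  then show "a \<in> iss s \<or> a = r0"
    using inv unfolding protocol_inv_def requests_ok_def by blast
qed

end

section \<open>Executions\<close>

locale arrow_run = arrow_system V E w R r0 node time lnk0
  for V :: "'v set" and E w and R :: "'r set" and r0 node time lnk0 +
  fixes es :: "('v, 'r) arrow_event list"
  assumes execution: "arrow_execution w R r0 node time lnk0 es"
begin

definition state :: "nat \<Rightarrow> ('v, 'r) arrow_state" where
  "state k = foldl (step node time) (init_state lnk0 r0) (take k es)"

lemma state_0: "state 0 = init_state lnk0 r0"
  by (simp add: state_def)

lemma state_Suc: "k < length es \<Longrightarrow> state (Suc k) = step node time (state k) (es!k)"
  by (simp add: state_def take_Suc_conv_app_nth)

lemma state_after_end: "length es \<le> k \<Longrightarrow> state k = final_state node time r0 lnk0 es"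
  by (simp add: state_def final_state_def)

lemma enabled_state: "k < length es \<Longrightarrow> enabled w R r0 time (state k) (es!k)"
  using execution unfolding arrow_execution_def state_def by (blast intro: valid_run_enabled)

lemma trans_final: "trans (state (length es)) = {}"
  using execution state_after_end unfolding arrow_execution_def by simp

lemma state_invariants: "protocol_inv (state k) \<and> queue_inv (state k)"
proof (induction k)
  case 0
  then show ?case using protocol_inv_init queue_inv_init by (simp add: state_0)
next
  case (Suc k)
  show ?case
  proof (cases "k < length es")
    case True
    then show ?thesis
      using Suc protocol_inv_step queue_step enabled_state state_Suc by metis
  next
    case False
    then show ?thesis using Suc state_after_end by simp
  qed
qed

lemma protocol_inv_state: "protocol_inv (state k)"
  using state_invariants by blast

lemma queue_inv_state: "queue_inv (state k)"
  using state_invariants by blast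

lemma queue_step_state:
  assumes "k < length es"
  shows "queue_progress (state k) (state (Suc k))"
    and "event_visits (es!k) a u \<tau> \<Longrightarrow> (tail (state k) u, a) \<in> queue_graph (state (Suc k))"
  using queue_step[OF protocol_inv_state queue_inv_state enabled_state[OF assms]] state_Suc[OF assms]
  by auto

lemma clk_state_mono: "j \<le> k \<Longrightarrow> clk (state j) \<le> clk (state k)"
proof (rule lift_Suc_mono_le)
  show "clk (state i) \<le> clk (state (Suc i))" for i
  proof (cases "i < length es")
    case True
    then show ?thesis using enabled_state[OF True] state_Suc[OF True] clk_step_ge by simp
  qed (simp add: state_after_end)
qed

lemma queue_graph_state_mono: "j \<le> k \<Longrightarrow> (queue_graph (state j))\<^sup>* \<subseteq> (queue_graph (state k))\<^sup>*"
proof (rule lift_Suc_mono_le)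
  show "(queue_graph (state i))\<^sup>* \<subseteq> (queue_graph (state (Suc i)))\<^sup>*" for i
  proof (cases "i < length es")
    case True
    then show ?thesis
      using queue_step_state(1)[OF True]
      by (intro rtrancl_subset_rtrancl) (simp add: queue_progress_def)
  qed (simp add: state_after_end)
qed

lemma tail_state_advance:
  "j \<le> k \<Longrightarrow> q \<in> V \<Longrightarrow> (tail (state j) q, tail (state k) q) \<in> (queue_graph (state k))\<^sup>*"
proof (induction k rule: dec_induct)
  case (step k)
  show ?case
  proof (cases "k < length es")
    case True
    then have "(tail (state j) q, tail (state k) q) \<in> (queue_graph (state (Suc k)))\<^sup>*"
      using step queue_graph_state_mono[of k "Suc k"] by auto
    moreover have "(tail (state k) q, tail (state (Suc k)) q) \<in> (queue_graph (state (Suc k)))\<^sup>*"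
      using queue_step_state(1)[OF True] step.prems by (simp add: queue_progress_def)
    ultimately show ?thesis by (rule rtrancl_trans)
  qed (use step in \<open>simp add: state_after_end\<close>)
qed simp

lemma transit_delivered:
  assumes "k \<le> length es" "m \<in> trans (state k)"
  shows "\<exists>j \<tau>. k \<le> j \<and> j < length es \<and> es!j = Deliver m \<tau>"
  using assms
proof (induction k rule: inc_induct)
  case base
  then show ?case using trans_final by simp
next
  case (step k)
  show ?case
  proof (cases "m \<in> trans (state (Suc k))")
    case True
    then show ?thesis using step.IH by (auto intro: Suc_leD)
  next
    case False
    then show ?thesis
      using trans_step_removed[OF step.prems] state_Suc[OF step.hyps(2)] step.hyps by fastforce
  qed
qed

lemma delivery_deadline:
  assumes k: "k < length es" and m: "(r, x, y, \<sigma>) \<in> trans (state k)"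
  shows "clk (state (Suc k)) \<le> \<sigma> + w x y"
proof -
  obtain j \<tau> where j: "k \<le> j" "j < length es" "es!j = Deliver (r, x, y, \<sigma>) \<tau>"
    using transit_delivered k m by (meson less_imp_le)
  then have "clk (state (Suc j)) \<le> \<sigma> + w x y"
    using enabled_state[OF j(2)] state_Suc[OF j(2)] by simp
  moreover have "clk (state (Suc k)) \<le> clk (state (Suc j))"
    using j(1) by (intro clk_state_mono) simp
  ultimately show ?thesis by simp
qed

lemma vis_state_event:
  "vis (state k) a u = Some \<tau> \<Longrightarrow> \<exists>j < length es. event_visits (es!j) a u \<tau>"
proof (induction k)
  case 0
  then show ?case by (simp add: state_0 init_state_def)
next
  case (Suc k)
  show ?case
  proof (cases "k < length es")
    case True
    then show ?thesis
      using Suc vis_step[where s = "state k" and e = "es!k" and a = a and u = u] state_Suc[OF True] by auto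
  qed (use Suc state_after_end in simp)
qed

lemma issued_state_event: "b \<in> iss (state k) \<Longrightarrow> \<exists>j < length es. es!j = Issue b"
proof (induction k)
  case 0
  then show ?case by (simp add: state_0 init_state_def)
next
  case (Suc k)
  show ?case
  proof (cases "k < length es")
    case True
    then show ?thesis
      using Suc iss_step[where s = "state k" and e = "es!k" and node = node and time = time] state_Suc[OF True] by auto
  qed (use Suc state_after_end in simp)
qed

lemma issue_event:
  assumes jb: "jb < length es" and eb: "es!jb = Issue b"
  shows "b \<in> R" "node b \<in> V" "clk (state (Suc jb)) = time b"
    "tail (state (Suc jb)) (node b) = b"
proof -
  show "b \<in> R" using enabled_state[OF jb] eb by simp
  then show "node b \<in> V" by (rule node_in_V)
  show "clk (state (Suc jb)) = time b" using state_Suc[OF jb] eb by simp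
  show "tail (state (Suc jb)) (node b) = b"
    using state_Suc[OF jb] eb by (simp add: tail_def sink_eq_self)
qed

end

section \<open>Timing of find messages\<close>

context wtree
begin

lemma reach_time_le:
  assumes visited: "vis s a p \<noteq> None" and dom: "\<And>q. vis s a q \<noteq> None \<Longrightarrow> q \<in> V"
    and v: "v \<in> V" and bound: "\<And>q \<tau>. vis s a q = Some \<tau> \<Longrightarrow> \<tau> \<le> B + tree_dist E w v q"
  shows "reach_time E w s a p \<le> B + tree_dist E w v p"
proof -
  let ?S = "{q. vis s a q \<noteq> None}" and ?f = "\<lambda>q. tree_dist E w q p"
  define p' where "p' = arg_min_on ?f ?S"
  have fin: "finite ?S" using dom finite_V by (blast intro: finite_subset)
  have ne: "?S \<noteq> {}" and p: "p \<in> ?S" using visited by auto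
  have "p' \<in> ?S" unfolding p'_def by (rule arg_min_if_finite(1)[OF fin ne])
  moreover have "?f p' \<le> ?f p" unfolding p'_def by (rule arg_min_least[OF fin ne p])
  ultimately obtain \<tau> where \<tau>: "vis s a p' = Some \<tau>" and "tree_dist E w p' p \<le> 0"
    using tree_dist_self[OF dom[OF visited]] by auto
  moreover have "p \<in> V" "p' \<in> V" using dom visited \<tau> by auto
  ultimately have "tree_dist E w p' p = 0"
    using tree_dist_nonneg by (meson antisym)
  moreover have "reach_time E w s a p = \<tau> + tree_dist E w p' p"
    using \<tau> by (simp add: reach_time_def p'_def arg_min_on_def)
  moreover have "\<tau> \<le> B + tree_dist E w v p + tree_dist E w p p'"
    using bound[OF \<tau>] tree_dist_triangle[OF v \<open>p \<in> V\<close> \<open>p' \<in> V\<close>] by simp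
  ultimately show ?thesis by (simp add: tree_dist_sym)
qed

end

context arrow_run
begin

(* After step k, a find message arriving at q would be queued after b. *)
definition behind :: "'r \<Rightarrow> nat \<Rightarrow> 'v \<Rightarrow> bool" where
  "behind b k q \<longleftrightarrow> (b, tail (state k) q) \<in> (queue_graph (state k))\<^sup>*"

lemma behind_mono: "behind b j q \<Longrightarrow> j \<le> k \<Longrightarrow> q \<in> V \<Longrightarrow> behind b k q"
  unfolding behind_def using queue_graph_state_mono tail_state_advance
  by (meson rtrancl_trans subsetD)

lemma behind_issuer:
  assumes "jb < length es" "es!jb = Issue b" "jb < k"
  shows "behind b k (node b)"
  using behind_mono[of b "Suc jb" "node b" k] issue_event[OF assms(1,2)] assms(3)
  by (simp add: behind_def)

definition crossing_bounded :: "'r \<Rightarrow> nat \<Rightarrow> bool" where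
  "crossing_bounded b k \<longleftrightarrow> (\<forall>r x y \<sigma>. (r, x, y, \<sigma>) \<in> trans (state k) \<longrightarrow>
     behind b k x \<longrightarrow> \<not> behind b k y \<longrightarrow> \<sigma> \<le> time b + tree_dist E w (node b) x)"

lemma clk_le_if_not_behind:
  assumes jb: "jb < length es" "es!jb = Issue b" and k: "jb < k" "k < length es"
    and bounded: "crossing_bounded b k" and q: "q \<in> V" "\<not> behind b k q"
  shows "clk (state (Suc k)) \<le> time b + tree_dist E w (node b) q"
proof -
  have "clk (state (Suc k)) - time b \<le> tree_dist E w (node b) q"
  proof (rule tree_dist_greatest[OF issue_event(2)[OF jb] q(1)])
    fix W assume W: "is_walk E W" "hd W = node b" "last W = q"
    then obtain i where i: "Suc i < length W" "behind b k (W!i)" "\<not> behind b k (W!Suc i)"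
      using list_crosses_boundary[of W "behind b k"] behind_issuer[OF jb k(1)] q(2)
      by (auto simp: is_walk_def)
    have edge: "E (W!i) (W!Suc i)" using W(1) i(1) by (simp add: is_walk_def)
    then obtain r \<sigma> where m: "(r, W!i, W!Suc i, \<sigma>) \<in> trans (state k)"
      using boundary_message[OF protocol_inv_state queue_inv_state] i(2,3)
      unfolding behind_def by blast
    have "\<sigma> \<le> time b + tree_dist E w (node b) (W!i)"
      using bounded m i(2,3) unfolding crossing_bounded_def by blast
    moreover have "clk (state (Suc k)) \<le> \<sigma> + w (W!i) (W!Suc i)"
      by (rule delivery_deadline[OF k(2) m])
    moreover have "tree_dist E w (node b) (W!i) + w (W!i) (W!Suc i) \<le> walk_weight w W"
      using tree_dist_add_edge_le[OF W(1) i(1)] W(2) by simp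
    ultimately show "clk (state (Suc k)) - time b \<le> walk_weight w W" by simp
  qed
  then show ?thesis by simp
qed

lemma crossing_message_persists:
  assumes k: "k < length es" and m: "(r, x, y, \<sigma>) \<in> trans (state (Suc k))"
    and x: "behind b k x" "behind b (Suc k) x" and y: "\<not> behind b (Suc k) y"
  shows "(r, x, y, \<sigma>) \<in> trans (state k)"
proof (rule ccontr)
  assume new: "(r, x, y, \<sigma>) \<notin> trans (state k)"
  have edge: "E x y" using transitD[OF protocol_inv_state m] by simp
  then have "x \<in> V" "y \<in> V" using edge_in_V by auto
  then have "\<not> behind b k y" using y behind_mono[of b k y "Suc k"] by auto
  then obtain r' \<sigma>' where m': "(r', x, y, \<sigma>') \<in> trans (state k)"
    using boundary_message[OF protocol_inv_state queue_inv_state edge] x(1)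
    unfolding behind_def by blast
  show False
  proof (cases "(r', x, y, \<sigma>') \<in> trans (state (Suc k))")
    case True
    then show False
      using transit_uniqueD[OF protocol_inv_state True m] m' new by simp
  next
    case False
    then obtain \<tau> where "es!k = Deliver (r', x, y, \<sigma>') \<tau>"
      using trans_step_removed[OF m'] state_Suc[OF k] by metis
    then have "lnk (state (Suc k)) y = x" using state_Suc[OF k] by simp
    then have "tail (state (Suc k)) y = tail (state (Suc k)) x"
      using tail_link[OF protocol_inv_state[of "Suc k"] \<open>y \<in> V\<close>] by simp
    then show False using x(2) y unfolding behind_def by simp
  qed
qed

lemma crossing_bounded_at_issue:
  assumes jb: "jb < length es" "es!jb = Issue b"
  shows "crossing_bounded b (Suc jb)"
proof -
  have "\<sigma> \<le> time b + tree_dist E w (node b) x" if "(r, x, y, \<sigma>) \<in> trans (state (Suc jb))" for r x y \<sigma>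
  proof -
    have "\<sigma> \<le> time b"
      using transitD[OF protocol_inv_state that] issue_event(3)[OF jb] by simp
    moreover have "x \<in> V" using transitD[OF protocol_inv_state that] edge_in_V by blast
    ultimately show ?thesis using tree_dist_nonneg[OF issue_event(2)[OF jb]] by fastforce
  qed
  then show ?thesis by (simp add: crossing_bounded_def)
qed

lemma crossing_bounded_after_issue:
  assumes jb: "jb < length es" "es!jb = Issue b" and k: "jb < k" "k \<le> length es"
  shows "crossing_bounded b k"
  using k(1)[unfolded Suc_le_eq[symmetric]] k(2)
proof (induction k rule: dec_induct)
  case base
  show ?case using crossing_bounded_at_issue[OF jb] .
next
  case (step k)
  have k: "jb < k" "k < length es" using step by auto
  show ?case
    unfolding crossing_bounded_def
  proof (intro allI impI)
    fix r x y \<sigma>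
    assume m: "(r, x, y, \<sigma>) \<in> trans (state (Suc k))"
      and x: "behind b (Suc k) x" and y: "\<not> behind b (Suc k) y"
    have "x \<in> V" using transitD[OF protocol_inv_state m] edge_in_V by blast
    show "\<sigma> \<le> time b + tree_dist E w (node b) x"
    proof (cases "behind b k x")
      case True
      then have "(r, x, y, \<sigma>) \<in> trans (state k)"
        using crossing_message_persists[OF k(2) m _ x y] by blast
      moreover have "y \<in> V" using transitD[OF protocol_inv_state m] edge_in_V by blast
      then have "\<not> behind b k y" using y behind_mono[of b k y "Suc k"] by auto
      ultimately show ?thesis
        using step.IH k(2) True unfolding crossing_bounded_def by auto
    next
      case False
      have "\<sigma> \<le> clk (state (Suc k))" using transitD[OF protocol_inv_state m] by simp
      also have "\<dots> \<le> time b + tree_dist E w (node b) x"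
        using clk_le_if_not_behind[OF jb k] step.IH k(2) \<open>x \<in> V\<close> False by simp
      finally show ?thesis .
    qed
  qed
qed

lemma visit_time_bound:
  assumes ab: "(a, b) \<in> queue_before R (state (length es))"
    and k: "k < length es" and visit: "event_visits (es!k) a u \<tau>"
  shows "\<tau> \<le> time b + tree_dist E w (node b) u"
proof (rule ccontr)
  assume late: "\<not> ?thesis"
  have b: "b \<in> iss (state (length es))"
    using queue_before_issued(1)[OF protocol_inv_state ab] .
  obtain jb where jb: "jb < length es" "es!jb = Issue b"
    using issued_state_event[OF b] by blast
  have u: "u \<in> V"
    using event_visits_in_V[OF protocol_inv_state enabled_state[OF k] visit] .
  have \<tau>: "clk (state (Suc k)) = \<tau>"
    using event_visits_clk[OF visit] state_Suc[OF k] by simp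
  have "jb < k"
  proof (rule ccontr)
    assume "\<not> jb < k"
    then have "\<tau> \<le> time b"
      using clk_state_mono[of "Suc k" "Suc jb"] \<tau> issue_event(3)[OF jb] by simp
    then show False
      using late tree_dist_nonneg[OF issue_event(2)[OF jb] u] by simp
  qed
  then have "behind b k u"
    using clk_le_if_not_behind[OF jb \<open>jb < k\<close> k] crossing_bounded_after_issue[OF jb \<open>jb < k\<close>] k u
      late \<tau> by force
  then have "(b, a) \<in> (queue_graph (state (Suc k)))\<^sup>*"
    using queue_graph_state_mono[of k "Suc k"] queue_step_state(2)[OF k visit]
    unfolding behind_def by (meson rtrancl.rtrancl_into_rtrancl subsetD le_SucI order_refl)
  then have "(b, a) \<in> (queue_graph (state (length es)))\<^sup>*"
    using queue_graph_state_mono[of "Suc k" "length es"] k by auto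
  moreover have "(a, b) \<in> (queue_graph (state (length es)))\<^sup>+"
    using ab queue_before_subset by blast
  ultimately have "(b, b) \<in> (queue_graph (state (length es)))\<^sup>+"
    by (rule rtrancl_trancl_trancl)
  then show False
    using queue_graph_acyclic[OF protocol_inv_state queue_inv_state] b by blast
qed

lemma queue_before_time_diff:
  assumes ab: "(a, b) \<in> queue_before R (state (length es))"
  shows "time a - time b \<le> tree_dist E w (node a) (node b)"
proof -
  have b: "b \<in> R" "node b \<in> V"
    using queue_before_issued(1)[OF protocol_inv_state ab] issued_in_R[OF protocol_inv_state]
      node_in_V by auto
  show ?thesis
  proof (cases "a = r0")
    case True
    then show ?thesis
      using time_r0 time_nonneg[OF b(1)] tree_dist_nonneg[OF node_in_V[OF r0_in_R] b(2)] by simp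
  next
    case False
    then have "a \<in> iss (state (length es))"
      using queue_before_issued(2)[OF protocol_inv_state ab] by simp
    then obtain ka where "ka < length es" "es!ka = Issue a"
      using issued_state_event by blast
    then have "time a \<le> time b + tree_dist E w (node b) (node a)"
      using visit_time_bound[OF ab] by (simp add: event_visits_def)
    then show ?thesis by (simp add: tree_dist_sym)
  qed
qed

lemma queue_before_reach_time:
  assumes ab: "(a, b) \<in> queue_before R (state (length es))"
    and p: "prd (state (length es)) a = Some p"
  shows "time a + Delta E w (state (length es)) time a (node p)
    \<le> time b + tree_dist E w (node p) (node b)"
proof -
  have "node b \<in> V"
    using queue_before_issued(1)[OF protocol_inv_state ab] issued_in_R[OF protocol_inv_state]
      node_in_V by auto
  moreover have "\<tau> \<le> time b + tree_dist E w (node b) q"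
    if "vis (state (length es)) a q = Some \<tau>" for q \<tau>
    using vis_state_event[OF that] visit_time_bound[OF ab] by blast
  ultimately have "reach_time E w (state (length es)) a (node p)
      \<le> time b + tree_dist E w (node b) (node p)"
    using prd_visited[OF protocol_inv_state p] visited_in_V[OF protocol_inv_state]
    by (intro reach_time_le)
  then show ?thesis by (simp add: Delta_def tree_dist_sym)
qed

end

theorem lemma14:
  fixes V :: "'v set" and E :: "'v \<Rightarrow> 'v \<Rightarrow> bool" and w :: "'v \<Rightarrow> 'v \<Rightarrow> real"
    and R :: "'r set" and r0 :: 'r and node :: "'r \<Rightarrow> 'v" and time :: "'r \<Rightarrow> real"
    and lnk0 :: "'v \<Rightarrow> 'v" and es :: "('v, 'r) arrow_event list" and a b :: 'r
  assumes "weighted_tree V E w"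
    and "arrow_requests V R r0 node time"
    and "initial_links V E w (node r0) lnk0"
    and "arrow_execution w R r0 node time lnk0 es"
    and "(a, b) \<in> queue_before R (final_state node time r0 lnk0 es)"
  shows "time a - time b \<le> tree_dist E w (node a) (node b) \<and>
         (\<forall>p. a \<noteq> r0 \<longrightarrow> prd (final_state node time r0 lnk0 es) a = Some p \<longrightarrow>
           time a + Delta E w (final_state node time r0 lnk0 es) time a (node p)
             \<le> time b + tree_dist E w (node p) (node b))"
proof -
  interpret arrow_run V E w R r0 node time lnk0 es
    using assms(1-4) by unfold_locales (simp_all add: wtree_def)
  have final: "final_state node time r0 lnk0 es = state (length es)"
    by (simp add: state_after_end)
  show ?thesis
    using queue_before_time_diff queue_before_reach_time assms(5) unfolding final by blast
qed

end
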